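(* Let $f_1,\dots,f_n:\mathbb{R}^d\to\mathbb{R}$ be convex, each $f_i$ being $L_i$-smooth with minimizer $x_i$. Let $\alpha_i\in(0,1)$, $T_i(x)=\alpha_ix+(1-\alpha_i)x_i$, $\tilde f(x)=\frac1n\sum_if_i(T_i(x))$, let $x^*$ be a minimizer of $\tilde f$, and $L_\alpha=\frac1n\sum_i\alpha_i^2L_i$. Let $\omega_i\ge0$ and $\beta_i\in(0,\frac{1}{\omega_i+1}]$. Consider DIANA applied to $\tilde f$: given $x^0,h_1^0,\dots,h_n^0$, for $k\ge0$ set $\Delta_i^k=\alpha_i\nabla f_i(T_i(x^k))-h_i^k$, $\hat\Delta_i^k=\mathcal{C}_i^k(\Delta_i^k)$, $h_i^{k+1}=h_i^k+\beta_i\hat\Delta_i^k$, $g^k=\frac1n\sum_i(h_i^k+\hat\Delta_i^k)$, $x^{k+1}=x^k-\gamma g^k$, with $\mathcal{C}_i^k\in\mathbb{B}^d(\omega_i)$ drawn independently across $i,k$. Let $\sigma_0^2=\frac1n\sum_i\omega_i\|h_i^0-\alpha_i\nabla f_i(T_i(x^* ))\|^2$ and $\overline{x}^k=\frac1k\sum_{j=1}^kx^j$. If \[0<\gamma\leq\frac{1}{4\left(L_\alpha+\frac{2\max_i\{L_i\alpha_i^2\omega_i\}}{n}+\frac{4\max_i\{\beta_i\omega_iL_i\alpha_i^2\}}{n\min_i\beta_i}\right)},\] then \[\mathbb{E}[\tilde f(\overline{x}^k)-\tilde f(x^* )]\leq\left(2(\tilde f(x^0)-\tilde f(x^* ))+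\frac{4\gamma}{n\min_i\beta_i}\sigma_0^2+\frac1\gamma\|x^0-x^*\|^2\right)\frac1k.\]
   Context: A (random) operator $\mathcal{C}$ belongs to $\mathbb{B}^d(\omega)$ if $\mathbb{E}[\mathcal{C}(x)] = x$ and $\mathbb{E}\|\mathcal{C}(x)-x\|^2\leq\omega\|x\|^2$ for all $x$. A differentiable $g$ is $L$-smooth if $\|\nabla g(x)-\nabla g(y)\|\leq L\|x-y\|$ for all $x,y$. *)

theory Defs
  imports "HOL-Probability.Probability"
begin

definition shiftT :: "real \<Rightarrow> 'a::real_vector \<Rightarrow> 'a \<Rightarrow> 'a" where
  "shiftT a xi x = a *\<^sub>R x + (1 - a) *\<^sub>R xi"

definition ftilde :: "nat \<Rightarrow> (nat \<Rightarrow> 'a::real_vector \<Rightarrow> real) \<Rightarrow> (nat \<Rightarrow> real) \<Rightarrow> (nat \<Rightarrow> 'a) \<Rightarrow> 'a \<Rightarrow> real" where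
  "ftilde n f \<alpha> xm x = (1 / real n) * (\<Sum>i<n. f i (shiftT (\<alpha> i) (xm i) x))"

end

(*
  DIANA applied to the shifted objective is DIANA applied to the finite sum of the functions
  phi_i = f_i o T_i, which are convex and (alpha_i^2 L_i)-smooth because T_i is affine. For such
  a sum the Lyapunov function

    Psi(x, h) = |x - x_star|^2
                + 4 gamma^2 / (n min_i beta_i) * (1/n) sum_i w_i |h_i - grad phi_i(x_star)|^2

  satisfies E[Psi(x^(k+1), h^(k+1)) + gamma (F(x^(k+1)) - F(x_star))] <= E[Psi(x^k, h^k)]:
  conditionally on the past, the gradient estimator is unbiased with variance controlled by the
  w_i, each memory h_i moves towards grad phi_i(x^k) at rate beta_i, and co-coercivity,
  |grad phi_i(x) - grad phi_i(x_star)|^2 <= 2 L_i (Bregman divergence of phi_i at x_star),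
  lets the step size condition absorb every second-order term. Telescoping and Jensen's
  inequality give E[F(mean of x^1..x^k) - F(x_star)] <= Psi(x^0, h^0) / (gamma k), which is the
  claimed bound even without its term 2 (F(x^0) - F(x_star)).
*)

theory Submission
  imports Defs
begin

section \<open>Convex smooth functions\<close>

lemma gderiv_along_line:
  fixes F :: "'a::real_inner \<Rightarrow> real"
  assumes "GDERIV F (x + t *\<^sub>R d) :> D"
  shows "((\<lambda>t. F (x + t *\<^sub>R d)) has_real_derivative D \<bullet> d) (at t)"
proof -
  have line: "((\<lambda>t. x + t *\<^sub>R d) has_derivative (\<lambda>s. s *\<^sub>R d)) (at t)"
    by (auto intro!: derivative_eq_intros)
  have "(F has_derivative (\<lambda>v. v \<bullet> D)) (at (x + t *\<^sub>R d))"
    using assms by (simp add: gderiv_def)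
  from has_derivative_compose[OF line this]
  have "((\<lambda>t. F (x + t *\<^sub>R d)) has_derivative (\<lambda>s. s * (D \<bullet> d))) (at t)"
    by (simp add: o_def inner_commute)
  then show ?thesis
    by (simp add: has_field_derivative_def mult.commute[of _ "D \<bullet> d"])
qed

lemma convex_on_gderiv_above_tangent:
  fixes F :: "'a::real_inner \<Rightarrow> real"
  assumes convex: "convex_on UNIV F" and deriv: "GDERIV F x :> D"
  shows "F x + D \<bullet> (y - x) \<le> F y"
proof -
  let ?d = "y - x"
  have "((\<lambda>t. F (x + t *\<^sub>R ?d)) has_real_derivative D \<bullet> ?d) (at 0)"
    using deriv by (intro gderiv_along_line) simp
  then have slope: "((\<lambda>t. (F (x + t *\<^sub>R ?d) - F x) / t) \<longlongrightarrow> D \<bullet> ?d) (at_right 0)"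
    unfolding DERIV_def by (simp add: filterlim_at_split)
  have "\<forall>\<^sub>F t in at_right 0. (F (x + t *\<^sub>R ?d) - F x) / t \<le> F y - F x"
    unfolding eventually_at_right_field
  proof (intro exI[of _ 1] conjI allI impI)
    fix t :: real assume t: "0 < t" "t < 1"
    have "F ((1 - t) *\<^sub>R x + t *\<^sub>R y) \<le> (1 - t) * F x + t * F y"
      using t convex by (intro convex_onD) auto
    moreover have "(1 - t) *\<^sub>R x + t *\<^sub>R y = x + t *\<^sub>R ?d" by (simp add: algebra_simps)
    ultimately show "(F (x + t *\<^sub>R ?d) - F x) / t \<le> F y - F x"
      using t by (simp add: divide_simps algebra_simps)
  qed simp
  then have "D \<bullet> ?d \<le> F y - F x"
    by (rule tendsto_upperbound[OF slope]) simp
  then show ?thesis by simp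
qed

lemma gderiv_lipschitz_descent:
  fixes F :: "'a::real_inner \<Rightarrow> real"
  assumes deriv: "\<And>z. GDERIV F z :> DF z"
    and lipschitz: "\<And>y z. norm (DF y - DF z) \<le> L * norm (y - z)"
  shows "F y \<le> F x + DF x \<bullet> (y - x) + L / 2 * (norm (y - x))\<^sup>2"
proof -
  let ?d = "y - x"
  define R where "R t = F (x + t *\<^sub>R ?d) - t * (DF x \<bullet> ?d) - L / 2 * t\<^sup>2 * (norm ?d)\<^sup>2" for t
  have R_deriv: "(R has_real_derivative (DF (x + t *\<^sub>R ?d) - DF x) \<bullet> ?d - L * t * (norm ?d)\<^sup>2) (at t)"
    for t
  proof -
    have "((\<lambda>t. F (x + t *\<^sub>R ?d)) has_real_derivative DF (x + t *\<^sub>R ?d) \<bullet> ?d) (at t)"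
      using deriv by (rule gderiv_along_line)
    then show ?thesis
      unfolding R_def by (auto intro!: derivative_eq_intros simp: inner_diff_left)
  qed
  have "R 1 \<le> R 0"
  proof (rule DERIV_nonpos_imp_nonincreasing[of 0 1 R])
    fix t :: real assume t: "0 \<le> t" "t \<le> 1"
    have "(DF (x + t *\<^sub>R ?d) - DF x) \<bullet> ?d \<le> norm (DF (x + t *\<^sub>R ?d) - DF x) * norm ?d"
      by (rule norm_cauchy_schwarz)
    also have "\<dots> \<le> L * norm (t *\<^sub>R ?d) * norm ?d"
      using lipschitz[of "x + t *\<^sub>R ?d" x] by (intro mult_right_mono) auto
    also have "\<dots> = L * t * (norm ?d)\<^sup>2"
      using t by (simp add: power2_eq_square)
    finally show "\<exists>r. (R has_real_derivative r) (at t) \<and> r \<le> 0"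
      using R_deriv by force
  qed simp
  then show ?thesis unfolding R_def by simp
qed

lemma gderiv_zero_at_minimum:
  fixes F :: "'a::real_inner \<Rightarrow> real"
  assumes "GDERIV F x :> D" and "\<And>y. F x \<le> F y"
  shows "D = 0"
proof -
  have "(\<lambda>v. v \<bullet> D) = (\<lambda>v. 0)"
    using assms by (intro differential_zero_maxmin[of x UNIV F]) (auto simp: gderiv_def)
  then have "D \<bullet> D = 0" by meson
  then show ?thesis by simp
qed

lemma lipschitz_constant_nonneg:
  fixes DF :: "'a::euclidean_space \<Rightarrow> 'b::real_normed_vector"
  assumes "\<And>y z. norm (DF y - DF z) \<le> L * norm (y - z)"
  shows "0 \<le> L"
proof -
  obtain b :: 'a where "b \<in> Basis" using nonempty_Basis by blast
  moreover have "0 \<le> L * norm (b - 0)"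
    using assms[of b 0] norm_ge_zero order_trans by blast
  ultimately show ?thesis by (simp add: zero_le_mult_iff)
qed

lemma gderiv_cocoercive:
  fixes F :: "'a::real_inner \<Rightarrow> real"
  assumes deriv: "\<And>z. GDERIV F z :> DF z"
    and lipschitz: "\<And>y z. norm (DF y - DF z) \<le> L * norm (y - z)"
    and tangent: "\<And>y z. F z + DF z \<bullet> (y - z) \<le> F y"
  shows "(norm (DF x - DF y))\<^sup>2 \<le> 2 * L * (F x - F y - DF y \<bullet> (x - y))"
proof (cases "L = 0 \<or> x = y")
  case True
  then show ?thesis using lipschitz[of x y] by auto
next
  case False
  have "0 \<le> L * norm (x - y)"
    by (rule order_trans[OF norm_ge_zero lipschitz])
  with False have L: "0 < L"
    by (simp add: zero_le_mult_iff)
  define P where "P z = F z - DF y \<bullet> z" for z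
  have P_deriv: "GDERIV P z :> DF z - DF y" for z
  proof -
    have "GDERIV (\<lambda>z. DF y \<bullet> z) z :> DF y"
      unfolding gderiv_def by (auto intro!: derivative_eq_intros simp: inner_commute)
    then show ?thesis unfolding P_def by (intro GDERIV_diff deriv)
  qed
  have P_lipschitz: "norm ((DF a - DF y) - (DF b - DF y)) \<le> L * norm (a - b)" for a b
    using lipschitz[of a b] by simp
  have P_min: "P y \<le> P z" for z
    using tangent[where y=z and z=y] unfolding P_def by (simp add: inner_diff_right)
  \<comment> \<open>$P$ is minimal at $y$, and a gradient step of length $1/L$ from $x$ decreases it
    by at least $\|\nabla P(x)\|^2 / (2L)$\<close>
  let ?g = "DF x - DF y"
  let ?z = "x - (1 / L) *\<^sub>R ?g"
  have "P ?z \<le> P x + ?g \<bullet> (?z - x) + L / 2 * (norm (?z - x))\<^sup>2"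
    by (rule gderiv_lipschitz_descent[of P "\<lambda>z. DF z - DF y", OF P_deriv P_lipschitz])
  also have "?g \<bullet> (?z - x) = - (norm ?g)\<^sup>2 / L"
    by (simp add: power2_norm_eq_inner)
  also have "(norm (?z - x))\<^sup>2 = (norm ?g)\<^sup>2 / L\<^sup>2"
    using L by (simp add: power_divide)
  also have "P x + - (norm ?g)\<^sup>2 / L + L / 2 * ((norm ?g)\<^sup>2 / L\<^sup>2) = P x - (norm ?g)\<^sup>2 / (2 * L)"
    using L by (simp add: power2_eq_square field_simps)
  finally have "(norm ?g)\<^sup>2 / (2 * L) \<le> P x - P y"
    using P_min[of ?z] by linarith
  then show ?thesis
    using L unfolding P_def by (simp add: field_simps inner_diff_right)
qed

lemma norm_add_power2:
  fixes a b :: "'a::real_inner"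
  shows "(norm (a + b))\<^sup>2 = (norm a)\<^sup>2 + 2 * (a \<bullet> b) + (norm b)\<^sup>2"
  by (simp add: power2_norm_eq_inner inner_add_left inner_add_right inner_commute)

lemma norm_diff_power2_le:
  fixes a b :: "'a::real_inner"
  shows "(norm (a - b))\<^sup>2 \<le> 2 * (norm a)\<^sup>2 + 2 * (norm b)\<^sup>2"
proof -
  have "(norm (a - b))\<^sup>2 + (norm (a + b))\<^sup>2 = 2 * (norm a)\<^sup>2 + 2 * (norm b)\<^sup>2"
    by (simp add: power2_norm_eq_inner inner_add_left inner_add_right inner_diff_left inner_diff_right
        inner_commute)
  then show ?thesis
    using zero_le_power2[of "norm (a + b)"] by linarith
qed

lemma memory_update_le:
  fixes a b :: "'a::real_inner"
  assumes "0 \<le> \<beta>" "\<beta> * (1 + w) \<le> 1"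
  shows "2 * \<beta> * (a \<bullet> (b - a)) + \<beta>\<^sup>2 * (1 + w) * (norm (b - a))\<^sup>2 \<le> \<beta> * ((norm b)\<^sup>2 - (norm a)\<^sup>2)"
proof -
  have "\<beta>\<^sup>2 * (1 + w) \<le> \<beta>"
    using assms mult_left_le[of "\<beta> * (1 + w)" \<beta>] by (simp add: power2_eq_square mult.assoc)
  then have "2 * \<beta> * (a \<bullet> (b - a)) + \<beta>\<^sup>2 * (1 + w) * (norm (b - a))\<^sup>2
      \<le> \<beta> * (2 * (a \<bullet> (b - a)) + (norm (b - a))\<^sup>2)"
    using mult_right_mono[of "\<beta>\<^sup>2 * (1 + w)" \<beta> "(norm (b - a))\<^sup>2"] by (simp add: algebra_simps)
  also have "2 * (a \<bullet> (b - a)) + (norm (b - a))\<^sup>2 = (norm b)\<^sup>2 - (norm a)\<^sup>2"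
    by (simp add: power2_norm_eq_inner inner_diff_left inner_diff_right inner_commute)
  finally show ?thesis .
qed

section \<open>Second moments and independence\<close>

lemma integral_norm_sq_sum_orthogonal:
  fixes d :: "'i \<Rightarrow> 'b \<Rightarrow> 'a::euclidean_space"
  assumes I: "finite I"
    and int: "\<And>i j. i \<in> I \<Longrightarrow> j \<in> I \<Longrightarrow> integrable M (\<lambda>\<omega>. d i \<omega> \<bullet> d j \<omega>)"
    and orth: "\<And>i j. i \<in> I \<Longrightarrow> j \<in> I \<Longrightarrow> i \<noteq> j \<Longrightarrow> (\<integral>\<omega>. d i \<omega> \<bullet> d j \<omega> \<partial>M) = 0"
  shows "integrable M (\<lambda>\<omega>. (norm (\<Sum>i\<in>I. d i \<omega>))\<^sup>2)"
    and "(\<integral>\<omega>. (norm (\<Sum>i\<in>I. d i \<omega>))\<^sup>2 \<partial>M) = (\<Sum>i\<in>I. \<integral>\<omega>. (norm (d i \<omega>))\<^sup>2 \<partial>M)"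
proof -
  have sq: "(norm (\<Sum>i\<in>I. d i \<omega>))\<^sup>2 = (\<Sum>i\<in>I. \<Sum>j\<in>I. d i \<omega> \<bullet> d j \<omega>)" for \<omega>
    unfolding power2_norm_eq_inner inner_sum_left by (simp add: inner_sum_right)
  show "integrable M (\<lambda>\<omega>. (norm (\<Sum>i\<in>I. d i \<omega>))\<^sup>2)"
    unfolding sq using int by auto
  have "(\<integral>\<omega>. (norm (\<Sum>i\<in>I. d i \<omega>))\<^sup>2 \<partial>M) = (\<Sum>i\<in>I. \<Sum>j\<in>I. \<integral>\<omega>. d i \<omega> \<bullet> d j \<omega> \<partial>M)"
    unfolding sq using int by (simp add: Bochner_Integration.integral_sum)
  also have "\<dots> = (\<Sum>i\<in>I. \<Sum>j\<in>I. if i = j then \<integral>\<omega>. d i \<omega> \<bullet> d i \<omega> \<partial>M else 0)"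
    using orth by (intro sum.cong refl) auto
  also have "\<dots> = (\<Sum>i\<in>I. \<integral>\<omega>. (norm (d i \<omega>))\<^sup>2 \<partial>M)"
    using I by (simp add: power2_norm_eq_inner)
  finally show "(\<integral>\<omega>. (norm (\<Sum>i\<in>I. d i \<omega>))\<^sup>2 \<partial>M) = (\<Sum>i\<in>I. \<integral>\<omega>. (norm (d i \<omega>))\<^sup>2 \<partial>M)" .
qed

lemma (in prob_space) expectation_norm_sq_decomp:
  fixes Z :: "'a \<Rightarrow> 'v::euclidean_space"
  assumes Z: "integrable M Z"
    and var: "integrable M (\<lambda>\<omega>. (norm (Z \<omega> - expectation Z))\<^sup>2)"
  shows "integrable M (\<lambda>\<omega>. (norm (Z \<omega>))\<^sup>2)"
    and "expectation (\<lambda>\<omega>. (norm (Z \<omega>))\<^sup>2)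
           = (norm (expectation Z))\<^sup>2 + expectation (\<lambda>\<omega>. (norm (Z \<omega> - expectation Z))\<^sup>2)"
proof -
  let ?m = "expectation Z"
  have sq: "(norm (Z \<omega>))\<^sup>2 = (norm (Z \<omega> - ?m))\<^sup>2 + 2 * (?m \<bullet> (Z \<omega> - ?m)) + (norm ?m)\<^sup>2" for \<omega>
    by (simp add: power2_norm_eq_inner inner_diff_left inner_diff_right inner_commute)
  show "integrable M (\<lambda>\<omega>. (norm (Z \<omega>))\<^sup>2)"
    unfolding sq using Z var by auto
  have "expectation (\<lambda>\<omega>. ?m \<bullet> (Z \<omega> - ?m)) = 0"
    using Z by (simp add: prob_space)
  then show "expectation (\<lambda>\<omega>. (norm (Z \<omega>))\<^sup>2) = (norm ?m)\<^sup>2 + expectation (\<lambda>\<omega>. (norm (Z \<omega> - ?m))\<^sup>2)"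
    unfolding sq using Z var by (simp add: prob_space)
qed

lemma (in prob_space) indep_var_integral_inner:
  fixes X Y :: "'a \<Rightarrow> 'v::euclidean_space"
  assumes ind: "indep_var borel X borel Y" and X: "integrable M X" and Y: "integrable M Y"
  shows "integrable M (\<lambda>\<omega>. X \<omega> \<bullet> Y \<omega>)"
    and "(\<integral>\<omega>. X \<omega> \<bullet> Y \<omega> \<partial>M) = expectation X \<bullet> expectation Y"
proof -
  have coord: "indep_var borel (\<lambda>\<omega>. X \<omega> \<bullet> e) borel (\<lambda>\<omega>. Y \<omega> \<bullet> e)" for e
    using indep_var_compose[OF ind, of "\<lambda>v. v \<bullet> e" borel "\<lambda>v. v \<bullet> e" borel] by (simp add: o_def)
  have coord_int: "integrable M (\<lambda>\<omega>. (X \<omega> \<bullet> e) * (Y \<omega> \<bullet> e))" for e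
    using X Y by (intro indep_var_integrable[OF coord]) auto
  have coords: "X \<omega> \<bullet> Y \<omega> = (\<Sum>e\<in>Basis. (X \<omega> \<bullet> e) * (Y \<omega> \<bullet> e))" for \<omega>
    by (rule euclidean_inner)
  show "integrable M (\<lambda>\<omega>. X \<omega> \<bullet> Y \<omega>)"
    unfolding coords using coord_int by (intro Bochner_Integration.integrable_sum)
  have "(\<integral>\<omega>. X \<omega> \<bullet> Y \<omega> \<partial>M) = (\<Sum>e\<in>Basis. (expectation X \<bullet> e) * (expectation Y \<bullet> e))"
    unfolding coords using coord_int X Y
    by (simp add: Bochner_Integration.integral_sum indep_var_lebesgue_integral[OF coord])
  also have "\<dots> = expectation X \<bullet> expectation Y"
    by (rule euclidean_inner[symmetric])
  finally show "(\<integral>\<omega>. X \<omega> \<bullet> Y \<omega> \<partial>M) = expectation X \<bullet> expectation Y" .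
qed

lemma (in prob_space) nn_integral_indep_var_le:
  assumes ind: "indep_var A X B Y"
    and f: "f \<in> borel_measurable (A \<Otimes>\<^sub>M B)"
    and g: "g \<in> borel_measurable A"
    and le: "\<And>a. a \<in> space A \<Longrightarrow> (\<integral>\<^sup>+\<omega>. f (a, Y \<omega>) \<partial>M) \<le> g a"
  shows "(\<integral>\<^sup>+\<omega>. f (X \<omega>, Y \<omega>) \<partial>M) \<le> (\<integral>\<^sup>+\<omega>. g (X \<omega>) \<partial>M)"
proof -
  have X: "X \<in> measurable M A" and Y: "Y \<in> measurable M B"
    using indep_var_rv1[OF ind] indep_var_rv2[OF ind] by auto
  interpret DX: prob_space "distr M A X" by (rule prob_space_distr[OF X])
  interpret DY: prob_space "distr M B Y" by (rule prob_space_distr[OF Y])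
  interpret XY: pair_prob_space "distr M A X" "distr M B Y" ..
  have "(\<integral>\<^sup>+\<omega>. f (X \<omega>, Y \<omega>) \<partial>M) = (\<integral>\<^sup>+z. f z \<partial>distr M (A \<Otimes>\<^sub>M B) (\<lambda>\<omega>. (X \<omega>, Y \<omega>)))"
    by (rule nn_integral_distr[symmetric]) (auto intro: measurable_Pair X Y f)
  also have "distr M (A \<Otimes>\<^sub>M B) (\<lambda>\<omega>. (X \<omega>, Y \<omega>)) = distr M A X \<Otimes>\<^sub>M distr M B Y"
    using ind[unfolded indep_var_distribution_eq] by simp
  also have "(\<integral>\<^sup>+z. f z \<partial>(distr M A X \<Otimes>\<^sub>M distr M B Y))
      = (\<integral>\<^sup>+a. \<integral>\<^sup>+b. f (a, b) \<partial>distr M B Y \<partial>distr M A X)"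
    by (rule DY.nn_integral_fst[symmetric])
      (simp add: f measurable_cong_sets[OF sets_pair_measure_cong[OF sets_distr sets_distr] refl])
  also have "\<dots> \<le> (\<integral>\<^sup>+a. g a \<partial>distr M A X)"
  proof (rule nn_integral_mono)
    fix a assume "a \<in> space (distr M A X)"
    then have a: "a \<in> space A" by simp
    have "(\<integral>\<^sup>+b. f (a, b) \<partial>distr M B Y) = (\<integral>\<^sup>+\<omega>. f (a, Y \<omega>) \<partial>M)"
      by (rule nn_integral_distr[OF Y]) (simp add: measurable_Pair2[OF f a])
    then show "(\<integral>\<^sup>+b. f (a, b) \<partial>distr M B Y) \<le> g a"
      using le[OF a] by simp
  qed
  also have "\<dots> = (\<integral>\<^sup>+\<omega>. g (X \<omega>) \<partial>M)"
    using g by (intro nn_integral_distr[OF X]) simp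
  finally show ?thesis .
qed

section \<open>Finite sums of convex smooth functions\<close>

locale convex_smooth_sum =
  fixes n :: nat
    and \<phi> :: "nat \<Rightarrow> 'a::euclidean_space \<Rightarrow> real"
    and g :: "nat \<Rightarrow> 'a \<Rightarrow> 'a"
    and L :: "nat \<Rightarrow> real"
    and xs :: 'a
  assumes n_pos: "0 < n"
    and convex: "\<And>i. i < n \<Longrightarrow> convex_on UNIV (\<phi> i)"
    and gradient: "\<And>i x. i < n \<Longrightarrow> GDERIV (\<phi> i) x :> g i x"
    and lipschitz: "\<And>i x y. i < n \<Longrightarrow> norm (g i x - g i y) \<le> L i * norm (x - y)"
    and minimizer: "\<And>x. (\<Sum>i<n. \<phi> i xs) \<le> (\<Sum>i<n. \<phi> i x)"
begin

definition avg :: "'a \<Rightarrow> real" where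
  "avg x = (1 / real n) * (\<Sum>i<n. \<phi> i x)"

definition grad_avg :: "'a \<Rightarrow> 'a" where
  "grad_avg x = (1 / real n) *\<^sub>R (\<Sum>i<n. g i x)"

definition L_avg :: real where
  "L_avg = (1 / real n) * (\<Sum>i<n. L i)"

definition gap :: "'a \<Rightarrow> real" where
  "gap x = avg x - avg xs"

definition bregman :: "nat \<Rightarrow> 'a \<Rightarrow> real" where
  "bregman i x = \<phi> i x - \<phi> i xs - g i xs \<bullet> (x - xs)"

lemma L_nonneg: "i < n \<Longrightarrow> 0 \<le> L i"
  using lipschitz_constant_nonneg lipschitz by blast

lemma L_avg_nonneg: "0 \<le> L_avg"
  unfolding L_avg_def using sum_nonneg[of "{..<n}" L] L_nonneg by simp

lemma above_tangent: "i < n \<Longrightarrow> \<phi> i x + g i x \<bullet> (y - x) \<le> \<phi> i y"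
  by (rule convex_on_gderiv_above_tangent[OF convex gradient])

lemma avg_gderiv: "GDERIV avg x :> grad_avg x"
proof -
  have "((\<lambda>x. \<Sum>i<n. \<phi> i x) has_derivative (\<lambda>v. \<Sum>i<n. v \<bullet> g i x)) (at x)"
    using gradient unfolding gderiv_def by (auto intro!: has_derivative_sum)
  then have "((\<lambda>x. (1 / real n) * (\<Sum>i<n. \<phi> i x)) has_derivative
      (\<lambda>v. (1 / real n) * (\<Sum>i<n. v \<bullet> g i x))) (at x)"
    by (rule has_derivative_mult_right)
  then show ?thesis
    unfolding gderiv_def avg_def[abs_def] grad_avg_def by (simp add: inner_sum_right)
qed

lemma grad_avg_lipschitz: "norm (grad_avg y - grad_avg z) \<le> L_avg * norm (y - z)"
proof -
  have "norm (grad_avg y - grad_avg z) = (1 / real n) * norm (\<Sum>i<n. g i y - g i z)"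
    unfolding grad_avg_def by (simp add: sum_subtractf flip: scaleR_diff_right)
  also have "\<dots> \<le> (1 / real n) * (\<Sum>i<n. L i * norm (y - z))"
    by (intro mult_left_mono order_trans[OF norm_sum] sum_mono lipschitz) auto
  also have "\<dots> = L_avg * norm (y - z)"
    unfolding L_avg_def by (simp add: sum_distrib_right)
  finally show ?thesis .
qed

lemma avg_above_tangent: "avg x + grad_avg x \<bullet> (y - x) \<le> avg y"
proof -
  have "(\<Sum>i<n. \<phi> i x + g i x \<bullet> (y - x)) \<le> (\<Sum>i<n. \<phi> i y)"
    by (intro sum_mono above_tangent) auto
  then show ?thesis
    unfolding avg_def grad_avg_def
    by (simp add: sum.distrib inner_sum_left divide_right_mono flip: add_divide_distrib)
qed

lemma convex_avg: "convex_on UNIV avg"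
proof (rule convex_onI)
  fix t :: real and x y assume t: "0 < t" "t < 1"
  have "(\<Sum>i<n. \<phi> i ((1 - t) *\<^sub>R x + t *\<^sub>R y)) \<le> (\<Sum>i<n. (1 - t) * \<phi> i x + t * \<phi> i y)"
    using t by (intro sum_mono convex_onD[OF convex]) auto
  then show "avg ((1 - t) *\<^sub>R x + t *\<^sub>R y) \<le> (1 - t) * avg x + t * avg y"
    unfolding avg_def by (simp add: sum.distrib divide_right_mono flip: sum_distrib_left add_divide_distrib)
qed simp

lemma avg_minimal: "avg xs \<le> avg x"
  unfolding avg_def using minimizer n_pos by (simp add: divide_right_mono)

lemma gap_nonneg: "0 \<le> gap x"
  unfolding gap_def using avg_minimal by simp

lemma grad_avg_minimizer: "grad_avg xs = 0"
  by (rule gderiv_zero_at_minimum[OF avg_gderiv avg_minimal])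

lemma avg_descent: "avg y \<le> avg x + grad_avg x \<bullet> (y - x) + L_avg / 2 * (norm (y - x))\<^sup>2"
  by (rule gderiv_lipschitz_descent[OF avg_gderiv grad_avg_lipschitz])

lemma gap_le_inner: "gap x \<le> (x - xs) \<bullet> grad_avg x"
  using avg_above_tangent[of x xs] unfolding gap_def
  by (simp add: inner_diff_left inner_diff_right inner_commute)

lemma norm_grad_avg_sq_le: "(norm (grad_avg x))\<^sup>2 \<le> 2 * L_avg * gap x"
  using gderiv_cocoercive[OF avg_gderiv grad_avg_lipschitz avg_above_tangent, of x xs]
  unfolding grad_avg_minimizer gap_def by simp

lemma bregman_nonneg: "i < n \<Longrightarrow> 0 \<le> bregman i x"
  using above_tangent[of i xs x] unfolding bregman_def by simp

lemma norm_grad_diff_sq_le: "i < n \<Longrightarrow> (norm (g i x - g i xs))\<^sup>2 \<le> 2 * L i * bregman i x"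
  using gderiv_cocoercive[OF gradient lipschitz above_tangent] unfolding bregman_def by blast

lemma avg_bregman: "(1 / real n) * (\<Sum>i<n. bregman i x) = gap x"
proof -
  have "(\<Sum>i<n. g i xs) = 0"
    using grad_avg_minimizer n_pos unfolding grad_avg_def by simp
  then have "(\<Sum>i<n. g i xs \<bullet> (x - xs)) = 0"
    by (simp flip: inner_sum_left)
  moreover have "(\<Sum>i<n. bregman i x) = (\<Sum>i<n. \<phi> i x) - (\<Sum>i<n. \<phi> i xs) - (\<Sum>i<n. g i xs \<bullet> (x - xs))"
    unfolding bregman_def by (simp add: sum_subtractf)
  ultimately show ?thesis
    unfolding gap_def avg_def by (simp add: diff_divide_distrib)
qed

lemma weighted_grad_diff_le:
  assumes c: "\<And>i. i < n \<Longrightarrow> 0 \<le> c i"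
  shows "(1 / real n) * (\<Sum>i<n. c i * (norm (g i x - g i xs))\<^sup>2)
           \<le> 2 * Max ((\<lambda>i. c i * L i) ` {..<n}) * gap x"
proof -
  let ?m = "Max ((\<lambda>i. c i * L i) ` {..<n})"
  have "c i * (norm (g i x - g i xs))\<^sup>2 \<le> 2 * ?m * bregman i x" if i: "i < n" for i
  proof -
    have "c i * (norm (g i x - g i xs))\<^sup>2 \<le> 2 * (c i * L i) * bregman i x"
      using mult_left_mono[OF norm_grad_diff_sq_le[OF i] c[OF i]] by (simp add: mult_ac)
    also have "\<dots> \<le> 2 * ?m * bregman i x"
      using i bregman_nonneg[OF i] by (intro mult_right_mono mult_left_mono Max_ge) auto
    finally show ?thesis .
  qed
  then have "(\<Sum>i<n. c i * (norm (g i x - g i xs))\<^sup>2) \<le> (\<Sum>i<n. 2 * ?m * bregman i x)"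
    by (intro sum_mono) auto
  then have "(\<Sum>i<n. c i * (norm (g i x - g i xs))\<^sup>2) \<le> 2 * ?m * (\<Sum>i<n. bregman i x)"
    by (simp add: sum_distrib_left)
  then have "(1 / real n) * (\<Sum>i<n. c i * (norm (g i x - g i xs))\<^sup>2)
      \<le> 2 * ?m * ((1 / real n) * (\<Sum>i<n. bregman i x))"
    using n_pos by (simp add: divide_right_mono)
  then show ?thesis
    unfolding avg_bregman .
qed

lemma avg_mean_le:
  assumes "finite J" "J \<noteq> {}"
  shows "avg ((1 / real (card J)) *\<^sub>R (\<Sum>j\<in>J. y j)) \<le> (1 / real (card J)) * (\<Sum>j\<in>J. avg (y j))"
  using convex_on_sum[OF assms convex_avg, of "\<lambda>_. 1 / real (card J)" y] assms
  by (simp add: scaleR_sum_right sum_distrib_left)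


lemma grad_measurable: "i < n \<Longrightarrow> g i \<in> borel_measurable borel"
proof -
  assume i: "i < n"
  have "(L i)-lipschitz_on UNIV (g i)"
    unfolding lipschitz_on_def using lipschitz[OF i] L_nonneg[OF i] by (simp add: dist_norm)
  then show ?thesis
    by (intro borel_measurable_continuous_onI lipschitz_on_continuous_on)
qed

lemma gap_measurable: "gap \<in> borel_measurable borel"
proof -
  have "continuous_on UNIV avg"
    using avg_gderiv unfolding gderiv_def
    by (intro continuous_at_imp_continuous_on ballI has_derivative_continuous) blast
  then show ?thesis
    unfolding gap_def[abs_def] by (intro borel_measurable_diff borel_measurable_continuous_onI) auto
qed

end

section \<open>One step of DIANA\<close>

locale diana = convex_smooth_sum n \<phi> g L xs
  for n :: nat
    and \<phi> :: "nat \<Rightarrow> 'a::euclidean_space \<Rightarrow> real"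
    and g :: "nat \<Rightarrow> 'a \<Rightarrow> 'a"
    and L :: "nat \<Rightarrow> real"
    and xs :: 'a +
  fixes w \<beta> :: "nat \<Rightarrow> real"
    and \<gamma> :: real
  assumes w_nonneg: "\<And>i. i < n \<Longrightarrow> 0 \<le> w i"
    and beta: "\<And>i. i < n \<Longrightarrow> 0 < \<beta> i \<and> \<beta> i \<le> 1 / (w i + 1)"
    and gamma_pos: "0 < \<gamma>"
    and gamma_le: "\<gamma> \<le> 1 / (4 * ((1 / real n) * (\<Sum>i<n. L i)
        + 2 * Max ((\<lambda>i. w i * L i) ` {..<n}) / real n
        + 4 * Max ((\<lambda>i. \<beta> i * w i * L i) ` {..<n}) / (real n * Min (\<beta> ` {..<n}))))"
begin

definition beta_min :: real where
  "beta_min = Min (\<beta> ` {..<n})"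

definition L_w :: real where
  "L_w = Max ((\<lambda>i. w i * L i) ` {..<n})"

definition L_bw :: real where
  "L_bw = Max ((\<lambda>i. \<beta> i * w i * L i) ` {..<n})"

definition gamma_L :: real where
  "gamma_L = \<gamma> * L_avg"

definition gamma_Lw :: real where
  "gamma_Lw = 2 * \<gamma> * L_w / real n"

definition gamma_Lbw :: real where
  "gamma_Lbw = 4 * \<gamma> * L_bw / (real n * beta_min)"

definition memory_error :: "(nat \<Rightarrow> 'a) \<Rightarrow> real" where
  "memory_error H = (1 / real n) * (\<Sum>i<n. w i * (norm (H i - g i xs))\<^sup>2)"

definition lyapunov :: "'a \<times> (nat \<Rightarrow> 'a) \<Rightarrow> real" where
  "lyapunov s = (norm (fst s - xs))\<^sup>2 + 4 * \<gamma>\<^sup>2 / (real n * beta_min) * memory_error (snd s)"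

text \<open>One DIANA step from the state $(x, h)$, where \<open>Z i\<close> is the compressed difference
  $\mathcal{C}_i(\nabla\varphi_i(x) - h_i)$.\<close>

definition grad_estimate :: "(nat \<Rightarrow> 'a) \<Rightarrow> (nat \<Rightarrow> 'a) \<Rightarrow> 'a" where
  "grad_estimate H Z = (1 / real n) *\<^sub>R (\<Sum>i<n. H i + Z i)"

definition diana_update :: "'a \<times> (nat \<Rightarrow> 'a) \<Rightarrow> (nat \<Rightarrow> 'a) \<Rightarrow> 'a \<times> (nat \<Rightarrow> 'a)" where
  "diana_update s Z = (fst s - \<gamma> *\<^sub>R grad_estimate (snd s) Z, \<lambda>i. snd s i + \<beta> i *\<^sub>R Z i)"

definition step_value :: "'a \<times> (nat \<Rightarrow> 'a) \<Rightarrow> (nat \<Rightarrow> 'a) \<Rightarrow> real" where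
  "step_value s Z = lyapunov (diana_update s Z) + \<gamma> * gap (fst (diana_update s Z))"

definition step_majorant :: "'a \<Rightarrow> (nat \<Rightarrow> 'a) \<Rightarrow> (nat \<Rightarrow> 'a) \<Rightarrow> real" where
  "step_majorant x H Z = lyapunov (x, H) + \<gamma> * gap x - 2 * \<gamma> * ((x - xs) \<bullet> grad_estimate H Z)
     - \<gamma>\<^sup>2 * (grad_avg x \<bullet> grad_estimate H Z) + (1 + gamma_L / 2) * \<gamma>\<^sup>2 * (norm (grad_estimate H Z))\<^sup>2
     + 4 * \<gamma>\<^sup>2 / (real n * beta_min) * ((1 / real n) * (\<Sum>i<n. w i * (2 * \<beta> i * ((H i - g i xs) \<bullet> Z i)
         + (\<beta> i)\<^sup>2 * (norm (Z i))\<^sup>2)))"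

lemma beta_min_pos: "0 < beta_min"
proof -
  have "beta_min \<in> \<beta> ` {..<n}"
    unfolding beta_min_def using n_pos by (intro Min_in) auto
  then show ?thesis using beta by auto
qed

lemma beta_min_le: "i < n \<Longrightarrow> beta_min \<le> \<beta> i"
  unfolding beta_min_def by (intro Min_le) auto

lemma L_w_nonneg: "0 \<le> L_w"
proof -
  have "w 0 * L 0 \<le> L_w"
    unfolding L_w_def using n_pos by (intro Max_ge) auto
  moreover have "0 \<le> w 0 * L 0"
    using n_pos w_nonneg L_nonneg by simp
  ultimately show ?thesis by linarith
qed

lemma L_bw_nonneg: "0 \<le> L_bw"
proof -
  have "\<beta> 0 * w 0 * L 0 \<le> L_bw"
    unfolding L_bw_def using n_pos by (intro Max_ge) auto
  moreover have "0 \<le> \<beta> 0 * w 0 * L 0"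
    using n_pos w_nonneg L_nonneg beta[of 0] by simp
  ultimately show ?thesis by linarith
qed

lemma step_size_budget:
  "0 \<le> gamma_L" "0 \<le> gamma_Lw" "0 \<le> gamma_Lbw" "gamma_L + gamma_Lw + gamma_Lbw \<le> 1 / 4"
proof -
  define S where "S = L_avg + 2 * L_w / real n + 4 * L_bw / (real n * beta_min)"
  have "0 \<le> S"
    unfolding S_def using L_avg_nonneg L_w_nonneg L_bw_nonneg n_pos beta_min_pos by simp
  moreover have "\<gamma> \<le> 1 / (4 * S)"
    using gamma_le unfolding S_def L_avg_def L_w_def L_bw_def beta_min_def .
  ultimately have "\<gamma> * S \<le> 1 / 4"
    using gamma_pos by (cases "S = 0") (auto simp: field_simps)
  then show "gamma_L + gamma_Lw + gamma_Lbw \<le> 1 / 4"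
    unfolding gamma_L_def gamma_Lw_def gamma_Lbw_def S_def by (simp add: field_simps)
  show "0 \<le> gamma_L" "0 \<le> gamma_Lw" "0 \<le> gamma_Lbw"
    unfolding gamma_L_def gamma_Lw_def gamma_Lbw_def
    using gamma_pos L_avg_nonneg L_w_nonneg L_bw_nonneg beta_min_pos by simp_all
qed

lemma memory_error_nonneg: "0 \<le> memory_error H"
  unfolding memory_error_def
  using sum_nonneg[of "{..<n}" "\<lambda>i. w i * (norm (H i - g i xs))\<^sup>2"] w_nonneg by simp

lemma lyapunov_nonneg: "0 \<le> lyapunov s"
  unfolding lyapunov_def using memory_error_nonneg beta_min_pos n_pos by simp

lemma lyapunov_cong:
  "fst s = fst s' \<Longrightarrow> (\<And>i. i < n \<Longrightarrow> snd s i = snd s' i) \<Longrightarrow> lyapunov s = lyapunov s'"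
  unfolding lyapunov_def memory_error_def by simp

lemma step_value_nonneg: "0 \<le> step_value s Z"
  unfolding step_value_def using lyapunov_nonneg gap_nonneg gamma_pos by simp

lemma step_value_cong:
  assumes "fst s = fst s'" "\<And>i. i < n \<Longrightarrow> snd s i = snd s' i" "\<And>i. i < n \<Longrightarrow> Z i = Z' i"
  shows "step_value s Z = step_value s' Z'"
proof -
  have "fst (diana_update s Z) = fst (diana_update s' Z')"
    using assms unfolding diana_update_def grad_estimate_def by (auto intro!: sum.cong)
  moreover have "snd (diana_update s Z) i = snd (diana_update s' Z') i" if "i < n" for i
    using assms that unfolding diana_update_def by simp
  ultimately show ?thesis
    unfolding step_value_def using lyapunov_cong by metis
qed

lemma lyapunov_measurable:
  assumes "X \<in> borel_measurable N" and "\<And>i. i < n \<Longrightarrow> (\<lambda>z. Hh z i) \<in> borel_measurable N"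
  shows "(\<lambda>z. lyapunov (X z, Hh z)) \<in> borel_measurable N"
  unfolding lyapunov_def memory_error_def fst_conv snd_conv using assms
  by (intro borel_measurable_add borel_measurable_times borel_measurable_power borel_measurable_const
      borel_measurable_sum measurable_compose[OF _ borel_measurable_norm] borel_measurable_diff) auto

lemma diana_update_measurable:
  assumes "X \<in> borel_measurable N" and "\<And>i. i < n \<Longrightarrow> (\<lambda>z. Hh z i) \<in> borel_measurable N"
    and "\<And>i. i < n \<Longrightarrow> (\<lambda>z. Zz z i) \<in> borel_measurable N"
  shows "(\<lambda>z. fst (diana_update (X z, Hh z) (Zz z))) \<in> borel_measurable N"
    and "i < n \<Longrightarrow> (\<lambda>z. snd (diana_update (X z, Hh z) (Zz z)) i) \<in> borel_measurable N"
  unfolding diana_update_def grad_estimate_def fst_conv snd_conv using assms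
  by (intro borel_measurable_add borel_measurable_diff borel_measurable_scaleR borel_measurable_const
      borel_measurable_sum; auto)+

lemma step_value_measurable:
  assumes "X \<in> borel_measurable N" and "\<And>i. i < n \<Longrightarrow> (\<lambda>z. Hh z i) \<in> borel_measurable N"
    and "\<And>i. i < n \<Longrightarrow> (\<lambda>z. Zz z i) \<in> borel_measurable N"
  shows "(\<lambda>z. step_value (X z, Hh z) (Zz z)) \<in> borel_measurable N"
proof -
  note update = diana_update_measurable[OF assms]
  have "(\<lambda>z. lyapunov (fst (diana_update (X z, Hh z) (Zz z)), snd (diana_update (X z, Hh z) (Zz z))))
      \<in> borel_measurable N"
    using update by (intro lyapunov_measurable)
  then show ?thesis
    unfolding step_value_def using update(1)
    by (intro borel_measurable_add borel_measurable_times borel_measurable_const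
        measurable_compose[OF _ gap_measurable]) auto
qed

lemma compression_variance_le:
  "(1 / (real n)\<^sup>2) * (\<Sum>i<n. w i * (norm (g i x - H i))\<^sup>2)
     \<le> (2 / real n) * (2 * L_w * gap x + memory_error H)"
proof -
  have "w i * (norm (g i x - H i))\<^sup>2
      \<le> 2 * (w i * (norm (g i x - g i xs))\<^sup>2) + 2 * (w i * (norm (H i - g i xs))\<^sup>2)" if i: "i < n" for i
    using mult_left_mono[OF norm_diff_power2_le[of "g i x - g i xs" "H i - g i xs"] w_nonneg[OF i]]
    by (simp add: algebra_simps)
  then have "(\<Sum>i<n. w i * (norm (g i x - H i))\<^sup>2)
      \<le> (\<Sum>i<n. 2 * (w i * (norm (g i x - g i xs))\<^sup>2) + 2 * (w i * (norm (H i - g i xs))\<^sup>2))"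
    by (intro sum_mono) auto
  also have "\<dots> = 2 * (\<Sum>i<n. w i * (norm (g i x - g i xs))\<^sup>2) + 2 * (\<Sum>i<n. w i * (norm (H i - g i xs))\<^sup>2)"
    by (simp add: sum.distrib sum_distrib_left)
  also have "\<dots> = 2 * real n * ((1 / real n) * (\<Sum>i<n. w i * (norm (g i x - g i xs))\<^sup>2) + memory_error H)"
    using n_pos unfolding memory_error_def by (simp add: field_simps)
  also have "\<dots> \<le> 2 * real n * (2 * L_w * gap x + memory_error H)"
    using weighted_grad_diff_le[of w x] w_nonneg n_pos unfolding L_w_def by simp
  finally have "(1 / (real n)\<^sup>2) * (\<Sum>i<n. w i * (norm (g i x - H i))\<^sup>2)
      \<le> (1 / (real n)\<^sup>2) * (2 * real n * (2 * L_w * gap x + memory_error H))"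
    by (rule mult_left_mono) simp
  then show ?thesis
    using n_pos by (simp add: power2_eq_square)
qed

lemma memory_drift_le:
  "(1 / real n) * (\<Sum>i<n. w i * (2 * \<beta> i * ((H i - g i xs) \<bullet> (g i x - H i))
       + (\<beta> i)\<^sup>2 * (1 + w i) * (norm (g i x - H i))\<^sup>2))
     \<le> 2 * L_bw * gap x - beta_min * memory_error H"
proof -
  have "w i * (2 * \<beta> i * ((H i - g i xs) \<bullet> (g i x - H i)) + (\<beta> i)\<^sup>2 * (1 + w i) * (norm (g i x - H i))\<^sup>2)
      \<le> \<beta> i * w i * (norm (g i x - g i xs))\<^sup>2 - beta_min * (w i * (norm (H i - g i xs))\<^sup>2)"
    if i: "i < n" for i
  proof -
    have "0 \<le> \<beta> i" "\<beta> i * (1 + w i) \<le> 1"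
      using beta[OF i] w_nonneg[OF i] by (auto simp: field_simps)
    from memory_update_le[OF this, of "H i - g i xs" "g i x - g i xs"]
    have "w i * (2 * \<beta> i * ((H i - g i xs) \<bullet> (g i x - H i)) + (\<beta> i)\<^sup>2 * (1 + w i) * (norm (g i x - H i))\<^sup>2)
        \<le> w i * (\<beta> i * ((norm (g i x - g i xs))\<^sup>2 - (norm (H i - g i xs))\<^sup>2))"
      using w_nonneg[OF i] by (intro mult_left_mono) auto
    also have "\<dots> = \<beta> i * w i * (norm (g i x - g i xs))\<^sup>2 - \<beta> i * (w i * (norm (H i - g i xs))\<^sup>2)"
      by (simp add: algebra_simps)
    also have "\<dots> \<le> \<beta> i * w i * (norm (g i x - g i xs))\<^sup>2 - beta_min * (w i * (norm (H i - g i xs))\<^sup>2)"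
      using mult_right_mono[OF beta_min_le[OF i], of "w i * (norm (H i - g i xs))\<^sup>2"] w_nonneg[OF i]
      by simp
    finally show ?thesis .
  qed
  then have "(\<Sum>i<n. w i * (2 * \<beta> i * ((H i - g i xs) \<bullet> (g i x - H i))
       + (\<beta> i)\<^sup>2 * (1 + w i) * (norm (g i x - H i))\<^sup>2))
     \<le> (\<Sum>i<n. \<beta> i * w i * (norm (g i x - g i xs))\<^sup>2 - beta_min * (w i * (norm (H i - g i xs))\<^sup>2))"
    by (intro sum_mono) auto
  also have "\<dots> = (\<Sum>i<n. \<beta> i * w i * (norm (g i x - g i xs))\<^sup>2)
      - beta_min * (\<Sum>i<n. w i * (norm (H i - g i xs))\<^sup>2)"
    by (simp add: sum_subtractf sum_distrib_left)
  moreover have "(1 / real n) * (\<Sum>i<n. \<beta> i * w i * (norm (g i x - g i xs))\<^sup>2) \<le> 2 * L_bw * gap x"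
    using weighted_grad_diff_le[of "\<lambda>i. \<beta> i * w i" x] beta w_nonneg unfolding L_bw_def
    by (simp add: less_imp_le)
  ultimately show ?thesis
    using n_pos unfolding memory_error_def by (simp add: field_simps)
qed

lemma memory_error_update:
  "memory_error (\<lambda>i. H i + \<beta> i *\<^sub>R Z i)
     = memory_error H + (1 / real n) * (\<Sum>i<n. w i * (2 * \<beta> i * ((H i - g i xs) \<bullet> Z i)
         + (\<beta> i)\<^sup>2 * (norm (Z i))\<^sup>2))"
proof -
  have "(norm (H i + \<beta> i *\<^sub>R Z i - g i xs))\<^sup>2
      = (norm (H i - g i xs))\<^sup>2 + (2 * \<beta> i * ((H i - g i xs) \<bullet> Z i) + (\<beta> i)\<^sup>2 * (norm (Z i))\<^sup>2)" for i
    using norm_add_power2[of "H i - g i xs" "\<beta> i *\<^sub>R Z i"]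
    by (simp add: algebra_simps power_mult_distrib)
  then show ?thesis
    unfolding memory_error_def by (simp add: distrib_left sum.distrib)
qed

lemma gradient_drift_le:
  "- 2 * \<gamma> * ((x - xs) \<bullet> grad_avg x) + \<gamma> * gap x + gamma_L / 2 * \<gamma>\<^sup>2 * (norm (grad_avg x))\<^sup>2
     \<le> (gamma_L\<^sup>2 - 1) * (\<gamma> * gap x)"
proof -
  have "- 2 * \<gamma> * ((x - xs) \<bullet> grad_avg x) \<le> - 2 * \<gamma> * gap x"
    using gap_le_inner[of x] gamma_pos by simp
  moreover have "gamma_L / 2 * \<gamma>\<^sup>2 * (norm (grad_avg x))\<^sup>2 \<le> gamma_L / 2 * \<gamma>\<^sup>2 * (2 * L_avg * gap x)"
    using step_size_budget(1) by (intro mult_left_mono norm_grad_avg_sq_le) auto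
  ultimately have "- 2 * \<gamma> * ((x - xs) \<bullet> grad_avg x) + \<gamma> * gap x + gamma_L / 2 * \<gamma>\<^sup>2 * (norm (grad_avg x))\<^sup>2
      \<le> - 2 * \<gamma> * gap x + \<gamma> * gap x + gamma_L / 2 * \<gamma>\<^sup>2 * (2 * L_avg * gap x)"
    by linarith
  also have "\<dots> = (gamma_L\<^sup>2 - 1) * (\<gamma> * gap x)"
    unfolding gamma_L_def by (simp add: power2_eq_square algebra_simps)
  finally show ?thesis .
qed

lemma noise_drift_le:
  "(1 + gamma_L / 2) * \<gamma>\<^sup>2 * ((1 / (real n)\<^sup>2) * (\<Sum>i<n. w i * (norm (g i x - H i))\<^sup>2))
   + 4 * \<gamma>\<^sup>2 / (real n * beta_min) * ((1 / real n) * (\<Sum>i<n. w i * (2 * \<beta> i * ((H i - g i xs) \<bullet> (g i x - H i))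
       + (\<beta> i)\<^sup>2 * (1 + w i) * (norm (g i x - H i))\<^sup>2)))
   \<le> (2 * (1 + gamma_L / 2) * gamma_Lw + 2 * gamma_Lbw) * (\<gamma> * gap x)
     + (2 * (1 + gamma_L / 2) - 4) * (\<gamma>\<^sup>2 * memory_error H / real n)"
proof -
  have "(1 + gamma_L / 2) * \<gamma>\<^sup>2 * ((1 / (real n)\<^sup>2) * (\<Sum>i<n. w i * (norm (g i x - H i))\<^sup>2))
      \<le> (1 + gamma_L / 2) * \<gamma>\<^sup>2 * ((2 / real n) * (2 * L_w * gap x + memory_error H))"
    using step_size_budget(1) by (intro mult_left_mono compression_variance_le) auto
  moreover have "4 * \<gamma>\<^sup>2 / (real n * beta_min) * ((1 / real n) * (\<Sum>i<n. w i * (2 * \<beta> i * ((H i - g i xs) \<bullet> (g i x - H i))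
       + (\<beta> i)\<^sup>2 * (1 + w i) * (norm (g i x - H i))\<^sup>2)))
      \<le> 4 * \<gamma>\<^sup>2 / (real n * beta_min) * (2 * L_bw * gap x - beta_min * memory_error H)"
    using n_pos beta_min_pos by (intro mult_left_mono memory_drift_le) auto
  ultimately have "(1 + gamma_L / 2) * \<gamma>\<^sup>2 * ((1 / (real n)\<^sup>2) * (\<Sum>i<n. w i * (norm (g i x - H i))\<^sup>2))
   + 4 * \<gamma>\<^sup>2 / (real n * beta_min) * ((1 / real n) * (\<Sum>i<n. w i * (2 * \<beta> i * ((H i - g i xs) \<bullet> (g i x - H i))
       + (\<beta> i)\<^sup>2 * (1 + w i) * (norm (g i x - H i))\<^sup>2)))
      \<le> (1 + gamma_L / 2) * \<gamma>\<^sup>2 * ((2 / real n) * (2 * L_w * gap x + memory_error H))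
        + 4 * \<gamma>\<^sup>2 / (real n * beta_min) * (2 * L_bw * gap x - beta_min * memory_error H)"
    by (rule add_mono)
  also have "\<dots> = (2 * (1 + gamma_L / 2) * gamma_Lw + 2 * gamma_Lbw) * (\<gamma> * gap x)
     + (2 * (1 + gamma_L / 2) - 4) * (\<gamma>\<^sup>2 * memory_error H / real n)"
    unfolding gamma_Lw_def gamma_Lbw_def using n_pos beta_min_pos
    by (simp add: field_simps power2_eq_square)
  finally show ?thesis .
qed

lemma lyapunov_drift_nonpos:
  "- 2 * \<gamma> * ((x - xs) \<bullet> grad_avg x)
   + (1 + gamma_L / 2) * \<gamma>\<^sup>2 * ((norm (grad_avg x))\<^sup>2
       + (1 / (real n)\<^sup>2) * (\<Sum>i<n. w i * (norm (g i x - H i))\<^sup>2))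
   + \<gamma> * gap x - \<gamma>\<^sup>2 * (norm (grad_avg x))\<^sup>2
   + 4 * \<gamma>\<^sup>2 / (real n * beta_min) * ((1 / real n) * (\<Sum>i<n. w i * (2 * \<beta> i * ((H i - g i xs) \<bullet> (g i x - H i))
       + (\<beta> i)\<^sup>2 * (1 + w i) * (norm (g i x - H i))\<^sup>2)))
   \<le> 0"
proof -
  define V where "V = (1 / (real n)\<^sup>2) * (\<Sum>i<n. w i * (norm (g i x - H i))\<^sup>2)"
  define R where "R = (1 / real n) * (\<Sum>i<n. w i * (2 * \<beta> i * ((H i - g i xs) \<bullet> (g i x - H i))
       + (\<beta> i)\<^sup>2 * (1 + w i) * (norm (g i x - H i))\<^sup>2))"
  define a where "a = \<gamma> * gap x"
  define b where "b = \<gamma>\<^sup>2 * memory_error H / real n"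
  note budget = step_size_budget
  have "gamma_L\<^sup>2 + 2 * (1 + gamma_L / 2) * gamma_Lw + 2 * gamma_Lbw \<le> 1"
  proof -
    have "gamma_L\<^sup>2 \<le> gamma_L / 4"
      using budget mult_left_mono[of gamma_L "1 / 4" gamma_L] by (simp add: power2_eq_square)
    moreover have "2 * (1 + gamma_L / 2) * gamma_Lw \<le> 9 / 4 * gamma_Lw"
      using budget by (intro mult_right_mono) auto
    ultimately show ?thesis
      using budget by linarith
  qed
  moreover have "0 \<le> a" "0 \<le> b"
    unfolding a_def b_def using gamma_pos gap_nonneg memory_error_nonneg by simp_all
  ultimately have "(gamma_L\<^sup>2 + 2 * (1 + gamma_L / 2) * gamma_Lw + 2 * gamma_Lbw - 1) * a \<le> 0"
    "(2 * (1 + gamma_L / 2) - 4) * b \<le> 0"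
    using budget by (auto intro: mult_nonpos_nonneg)
  then have "(gamma_L\<^sup>2 - 1) * a + ((2 * (1 + gamma_L / 2) * gamma_Lw + 2 * gamma_Lbw) * a
      + (2 * (1 + gamma_L / 2) - 4) * b) \<le> 0"
    by (simp add: algebra_simps)
  moreover have "- 2 * \<gamma> * ((x - xs) \<bullet> grad_avg x) + (1 + gamma_L / 2) * \<gamma>\<^sup>2 * ((norm (grad_avg x))\<^sup>2 + V)
      + \<gamma> * gap x - \<gamma>\<^sup>2 * (norm (grad_avg x))\<^sup>2 + 4 * \<gamma>\<^sup>2 / (real n * beta_min) * R
    = (- 2 * \<gamma> * ((x - xs) \<bullet> grad_avg x) + \<gamma> * gap x + gamma_L / 2 * \<gamma>\<^sup>2 * (norm (grad_avg x))\<^sup>2)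
      + ((1 + gamma_L / 2) * \<gamma>\<^sup>2 * V + 4 * \<gamma>\<^sup>2 / (real n * beta_min) * R)"
    by (simp add: algebra_simps)
  ultimately show ?thesis
    using add_mono[OF gradient_drift_le noise_drift_le[of x H, folded V_def R_def], of x]
    unfolding V_def R_def a_def b_def by linarith
qed

lemma step_value_le_majorant: "step_value (x, H) Z \<le> step_majorant x H Z"
proof -
  let ?G = "grad_estimate H Z"
  have dist: "(norm (x - \<gamma> *\<^sub>R ?G - xs))\<^sup>2 = (norm (x - xs))\<^sup>2 - 2 * \<gamma> * ((x - xs) \<bullet> ?G) + \<gamma>\<^sup>2 * (norm ?G)\<^sup>2"
    using norm_add_power2[of "x - xs" "- \<gamma> *\<^sub>R ?G"] by (simp add: power_mult_distrib algebra_simps)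
  have "gap (x - \<gamma> *\<^sub>R ?G) \<le> gap x - \<gamma> * (grad_avg x \<bullet> ?G) + L_avg / 2 * \<gamma>\<^sup>2 * (norm ?G)\<^sup>2"
    using avg_descent[of "x - \<gamma> *\<^sub>R ?G" x] unfolding gap_def by (simp add: power_mult_distrib)
  then have "\<gamma> * gap (x - \<gamma> *\<^sub>R ?G) \<le> \<gamma> * (gap x - \<gamma> * (grad_avg x \<bullet> ?G) + L_avg / 2 * \<gamma>\<^sup>2 * (norm ?G)\<^sup>2)"
    using gamma_pos by (intro mult_left_mono) auto
  then show ?thesis
    unfolding step_value_def step_majorant_def diana_update_def lyapunov_def gamma_L_def
      fst_conv snd_conv dist memory_error_update
    by (simp add: algebra_simps power2_eq_square)
qed

context
  fixes N :: "'m measure" and Z :: "'m \<Rightarrow> nat \<Rightarrow> 'a" and x :: 'a and H :: "nat \<Rightarrow> 'a"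
  assumes N: "prob_space N"
    and Z_mean: "\<And>i. i < n \<Longrightarrow> integrable N (\<lambda>\<omega>. Z \<omega> i) \<and> (\<integral>\<omega>. Z \<omega> i \<partial>N) = g i x - H i"
    and Z_var: "\<And>i. i < n \<Longrightarrow> integrable N (\<lambda>\<omega>. (norm (Z \<omega> i - (g i x - H i)))\<^sup>2) \<and>
        (\<integral>\<omega>. (norm (Z \<omega> i - (g i x - H i)))\<^sup>2 \<partial>N) \<le> w i * (norm (g i x - H i))\<^sup>2"
    and Z_uncorrelated: "\<And>i j. i < n \<Longrightarrow> j < n \<Longrightarrow> i \<noteq> j \<Longrightarrow>
        integrable N (\<lambda>\<omega>. (Z \<omega> i - (g i x - H i)) \<bullet> (Z \<omega> j - (g j x - H j))) \<and>
        (\<integral>\<omega>. (Z \<omega> i - (g i x - H i)) \<bullet> (Z \<omega> j - (g j x - H j)) \<partial>N) = 0"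
begin

interpretation N: prob_space N by (rule N)

lemma grad_estimate_unbiased:
  "integrable N (\<lambda>\<omega>. grad_estimate H (Z \<omega>))" "(\<integral>\<omega>. grad_estimate H (Z \<omega>) \<partial>N) = grad_avg x"
proof -
  show "integrable N (\<lambda>\<omega>. grad_estimate H (Z \<omega>))"
    unfolding grad_estimate_def using Z_mean
    by (intro integrable_scaleR_right Bochner_Integration.integrable_sum Bochner_Integration.integrable_add) auto
  have "(\<integral>\<omega>. grad_estimate H (Z \<omega>) \<partial>N) = (1 / real n) *\<^sub>R (\<Sum>i<n. H i + (g i x - H i))"
    unfolding grad_estimate_def using Z_mean by (simp add: Bochner_Integration.integral_sum N.prob_space)
  then show "(\<integral>\<omega>. grad_estimate H (Z \<omega>) \<partial>N) = grad_avg x"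
    by (simp add: grad_avg_def)
qed

lemma grad_estimate_second_moment:
  "integrable N (\<lambda>\<omega>. (norm (grad_estimate H (Z \<omega>)))\<^sup>2)"
  "(\<integral>\<omega>. (norm (grad_estimate H (Z \<omega>)))\<^sup>2 \<partial>N)
     \<le> (norm (grad_avg x))\<^sup>2 + (1 / (real n)\<^sup>2) * (\<Sum>i<n. w i * (norm (g i x - H i))\<^sup>2)"
proof -
  define d where "d i \<omega> = Z \<omega> i - (g i x - H i)" for i \<omega>
  have d_int: "integrable N (\<lambda>\<omega>. d i \<omega> \<bullet> d j \<omega>)" if "i \<in> {..<n}" "j \<in> {..<n}" for i j
    using that Z_var Z_uncorrelated unfolding d_def by (cases "i = j") (auto simp: power2_norm_eq_inner)
  have d_orth: "(\<integral>\<omega>. d i \<omega> \<bullet> d j \<omega> \<partial>N) = 0" if "i \<in> {..<n}" "j \<in> {..<n}" "i \<noteq> j" for i j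
    using that Z_uncorrelated unfolding d_def by auto
  have dev: "grad_estimate H (Z \<omega>) - grad_avg x = (1 / real n) *\<^sub>R (\<Sum>i<n. d i \<omega>)" for \<omega>
    unfolding grad_estimate_def grad_avg_def d_def
    by (simp add: sum.distrib sum_subtractf scaleR_diff_right scaleR_add_right algebra_simps)
  have sq: "(norm (grad_estimate H (Z \<omega>) - grad_avg x))\<^sup>2 = (1 / (real n)\<^sup>2) * (norm (\<Sum>i<n. d i \<omega>))\<^sup>2" for \<omega>
    unfolding dev by (simp add: power_mult_distrib power_divide)
  note pythagoras = integral_norm_sq_sum_orthogonal[where I="{..<n}" and M=N, OF _ d_int d_orth, simplified]
  have var_int: "integrable N (\<lambda>\<omega>. (norm (grad_estimate H (Z \<omega>) - grad_avg x))\<^sup>2)"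
    unfolding sq using pythagoras(1) by simp
  have "(\<integral>\<omega>. (norm (grad_estimate H (Z \<omega>) - grad_avg x))\<^sup>2 \<partial>N)
      = (1 / (real n)\<^sup>2) * (\<Sum>i<n. \<integral>\<omega>. (norm (d i \<omega>))\<^sup>2 \<partial>N)"
    unfolding sq using pythagoras(2) by simp
  also have "\<dots> \<le> (1 / (real n)\<^sup>2) * (\<Sum>i<n. w i * (norm (g i x - H i))\<^sup>2)"
    using Z_var unfolding d_def by (intro mult_left_mono sum_mono) auto
  finally have var: "(\<integral>\<omega>. (norm (grad_estimate H (Z \<omega>) - grad_avg x))\<^sup>2 \<partial>N)
      \<le> (1 / (real n)\<^sup>2) * (\<Sum>i<n. w i * (norm (g i x - H i))\<^sup>2)" .
  note decomp = N.expectation_norm_sq_decomp[OF grad_estimate_unbiased(1), unfolded grad_estimate_unbiased(2)]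
  show "integrable N (\<lambda>\<omega>. (norm (grad_estimate H (Z \<omega>)))\<^sup>2)"
    using decomp(1)[OF var_int] .
  show "(\<integral>\<omega>. (norm (grad_estimate H (Z \<omega>)))\<^sup>2 \<partial>N)
      \<le> (norm (grad_avg x))\<^sup>2 + (1 / (real n)\<^sup>2) * (\<Sum>i<n. w i * (norm (g i x - H i))\<^sup>2)"
    using decomp(2)[OF var_int] var by simp
qed

lemma compressed_second_moment:
  assumes i: "i < n"
  shows "integrable N (\<lambda>\<omega>. (norm (Z \<omega> i))\<^sup>2)"
    and "(\<integral>\<omega>. (norm (Z \<omega> i))\<^sup>2 \<partial>N) \<le> (1 + w i) * (norm (g i x - H i))\<^sup>2"
proof -
  note decomp = N.expectation_norm_sq_decomp[of "\<lambda>\<omega>. Z \<omega> i", unfolded conjunct2[OF Z_mean[OF i]]]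
  show "integrable N (\<lambda>\<omega>. (norm (Z \<omega> i))\<^sup>2)"
    using decomp(1) Z_mean[OF i] Z_var[OF i] by blast
  show "(\<integral>\<omega>. (norm (Z \<omega> i))\<^sup>2 \<partial>N) \<le> (1 + w i) * (norm (g i x - H i))\<^sup>2"
    using decomp(2) Z_mean[OF i] Z_var[OF i] by (simp add: algebra_simps)
qed

lemma memory_increment_moment:
  "integrable N (\<lambda>\<omega>. (1 / real n) * (\<Sum>i<n. w i * (2 * \<beta> i * ((H i - g i xs) \<bullet> Z \<omega> i)
     + (\<beta> i)\<^sup>2 * (norm (Z \<omega> i))\<^sup>2)))"
  "(\<integral>\<omega>. (1 / real n) * (\<Sum>i<n. w i * (2 * \<beta> i * ((H i - g i xs) \<bullet> Z \<omega> i)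
     + (\<beta> i)\<^sup>2 * (norm (Z \<omega> i))\<^sup>2)) \<partial>N)
   \<le> (1 / real n) * (\<Sum>i<n. w i * (2 * \<beta> i * ((H i - g i xs) \<bullet> (g i x - H i))
     + (\<beta> i)\<^sup>2 * (1 + w i) * (norm (g i x - H i))\<^sup>2))"
proof -
  have int: "integrable N (\<lambda>\<omega>. w i * (2 * \<beta> i * ((H i - g i xs) \<bullet> Z \<omega> i) + (\<beta> i)\<^sup>2 * (norm (Z \<omega> i))\<^sup>2))"
    if i: "i < n" for i
    using Z_mean[OF i] compressed_second_moment(1)[OF i] by auto
  then show "integrable N (\<lambda>\<omega>. (1 / real n) * (\<Sum>i<n. w i * (2 * \<beta> i * ((H i - g i xs) \<bullet> Z \<omega> i)
     + (\<beta> i)\<^sup>2 * (norm (Z \<omega> i))\<^sup>2)))"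
    by (intro integrable_mult_right Bochner_Integration.integrable_sum) auto
  have "(\<integral>\<omega>. w i * (2 * \<beta> i * ((H i - g i xs) \<bullet> Z \<omega> i) + (\<beta> i)\<^sup>2 * (norm (Z \<omega> i))\<^sup>2) \<partial>N)
      \<le> w i * (2 * \<beta> i * ((H i - g i xs) \<bullet> (g i x - H i)) + (\<beta> i)\<^sup>2 * (1 + w i) * (norm (g i x - H i))\<^sup>2)"
    if i: "i < n" for i
  proof -
    have "(\<integral>\<omega>. w i * (2 * \<beta> i * ((H i - g i xs) \<bullet> Z \<omega> i) + (\<beta> i)\<^sup>2 * (norm (Z \<omega> i))\<^sup>2) \<partial>N)
        = w i * (2 * \<beta> i * ((H i - g i xs) \<bullet> (g i x - H i)) + (\<beta> i)\<^sup>2 * (\<integral>\<omega>. (norm (Z \<omega> i))\<^sup>2 \<partial>N))"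
      using Z_mean[OF i] compressed_second_moment(1)[OF i] by simp
    also have "\<dots> \<le> w i * (2 * \<beta> i * ((H i - g i xs) \<bullet> (g i x - H i)) + (\<beta> i)\<^sup>2 * ((1 + w i) * (norm (g i x - H i))\<^sup>2))"
      using compressed_second_moment(2)[OF i] w_nonneg[OF i] by (intro mult_left_mono add_left_mono) auto
    finally show ?thesis by (simp add: mult_ac)
  qed
  then have "(1 / real n) * (\<Sum>i<n. \<integral>\<omega>. w i * (2 * \<beta> i * ((H i - g i xs) \<bullet> Z \<omega> i)
      + (\<beta> i)\<^sup>2 * (norm (Z \<omega> i))\<^sup>2) \<partial>N)
    \<le> (1 / real n) * (\<Sum>i<n. w i * (2 * \<beta> i * ((H i - g i xs) \<bullet> (g i x - H i))
      + (\<beta> i)\<^sup>2 * (1 + w i) * (norm (g i x - H i))\<^sup>2))"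
    by (intro mult_left_mono sum_mono) auto
  moreover have "(\<integral>\<omega>. (1 / real n) * (\<Sum>i<n. w i * (2 * \<beta> i * ((H i - g i xs) \<bullet> Z \<omega> i)
      + (\<beta> i)\<^sup>2 * (norm (Z \<omega> i))\<^sup>2)) \<partial>N)
    = (1 / real n) * (\<Sum>i<n. \<integral>\<omega>. w i * (2 * \<beta> i * ((H i - g i xs) \<bullet> Z \<omega> i)
      + (\<beta> i)\<^sup>2 * (norm (Z \<omega> i))\<^sup>2) \<partial>N)"
    using int by (simp add: Bochner_Integration.integral_sum)
  ultimately show "(\<integral>\<omega>. (1 / real n) * (\<Sum>i<n. w i * (2 * \<beta> i * ((H i - g i xs) \<bullet> Z \<omega> i)
     + (\<beta> i)\<^sup>2 * (norm (Z \<omega> i))\<^sup>2)) \<partial>N)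
   \<le> (1 / real n) * (\<Sum>i<n. w i * (2 * \<beta> i * ((H i - g i xs) \<bullet> (g i x - H i))
     + (\<beta> i)\<^sup>2 * (1 + w i) * (norm (g i x - H i))\<^sup>2))"
    by (simp only:)
qed

lemma step_majorant_expectation:
  "integrable N (\<lambda>\<omega>. step_majorant x H (Z \<omega>))" "(\<integral>\<omega>. step_majorant x H (Z \<omega>) \<partial>N) \<le> lyapunov (x, H)"
proof -
  define G where "G \<omega> = grad_estimate H (Z \<omega>)" for \<omega>
  define P where "P \<omega> = (1 / real n) * (\<Sum>i<n. w i * (2 * \<beta> i * ((H i - g i xs) \<bullet> Z \<omega> i)
     + (\<beta> i)\<^sup>2 * (norm (Z \<omega> i))\<^sup>2))" for \<omega>
  define c where "c = (1 + gamma_L / 2) * \<gamma>\<^sup>2"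
  define C where "C = 4 * \<gamma>\<^sup>2 / (real n * beta_min)"
  have majorant: "step_majorant x H (Z \<omega>) = lyapunov (x, H) + \<gamma> * gap x - 2 * \<gamma> * ((x - xs) \<bullet> G \<omega>)
      - \<gamma>\<^sup>2 * (grad_avg x \<bullet> G \<omega>) + c * (norm (G \<omega>))\<^sup>2 + C * P \<omega>" for \<omega>
    unfolding step_majorant_def G_def P_def c_def C_def ..
  note G = grad_estimate_unbiased[folded G_def] grad_estimate_second_moment[folded G_def]
  note P = memory_increment_moment[folded P_def]
  show "integrable N (\<lambda>\<omega>. step_majorant x H (Z \<omega>))"
    unfolding majorant using G P by auto
  have "(\<integral>\<omega>. step_majorant x H (Z \<omega>) \<partial>N) = lyapunov (x, H) + \<gamma> * gap x - 2 * \<gamma> * ((x - xs) \<bullet> grad_avg x)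
      - \<gamma>\<^sup>2 * (norm (grad_avg x))\<^sup>2 + c * (\<integral>\<omega>. (norm (G \<omega>))\<^sup>2 \<partial>N) + C * (\<integral>\<omega>. P \<omega> \<partial>N)"
    unfolding majorant using G P by (simp add: N.prob_space power2_norm_eq_inner)
  also have "\<dots> \<le> lyapunov (x, H) + \<gamma> * gap x - 2 * \<gamma> * ((x - xs) \<bullet> grad_avg x)
      - \<gamma>\<^sup>2 * (norm (grad_avg x))\<^sup>2
      + c * ((norm (grad_avg x))\<^sup>2 + (1 / (real n)\<^sup>2) * (\<Sum>i<n. w i * (norm (g i x - H i))\<^sup>2))
      + C * ((1 / real n) * (\<Sum>i<n. w i * (2 * \<beta> i * ((H i - g i xs) \<bullet> (g i x - H i))
          + (\<beta> i)\<^sup>2 * (1 + w i) * (norm (g i x - H i))\<^sup>2)))"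
    using G P step_size_budget(1) n_pos beta_min_pos unfolding c_def C_def
    by (intro add_mono mult_left_mono order_refl) auto
  also have "\<dots> \<le> lyapunov (x, H)"
    using lyapunov_drift_nonpos[of x H] unfolding c_def C_def by (simp add: mult.assoc)
  finally show "(\<integral>\<omega>. step_majorant x H (Z \<omega>) \<partial>N) \<le> lyapunov (x, H)" .
qed

lemma lyapunov_expected_decrease:
  "(\<integral>\<^sup>+\<omega>. ennreal (step_value (x, H) (Z \<omega>)) \<partial>N) \<le> ennreal (lyapunov (x, H))"
proof -
  have "(\<integral>\<^sup>+\<omega>. ennreal (step_value (x, H) (Z \<omega>)) \<partial>N) \<le> (\<integral>\<^sup>+\<omega>. ennreal (step_majorant x H (Z \<omega>)) \<partial>N)"
    by (intro nn_integral_mono ennreal_leI step_value_le_majorant)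
  also have "\<dots> = ennreal (\<integral>\<omega>. step_majorant x H (Z \<omega>) \<partial>N)"
    using order_trans[OF step_value_nonneg step_value_le_majorant]
    by (intro nn_integral_eq_integral AE_I2 step_majorant_expectation(1)) auto
  also have "\<dots> \<le> ennreal (lyapunov (x, H))"
    using step_majorant_expectation(2) by (rule ennreal_leI)
  finally show ?thesis .
qed

end

end

section \<open>The DIANA iteration\<close>

locale diana_process = diana n \<phi> g L xs w \<beta> \<gamma>
  for n :: nat
    and \<phi> :: "nat \<Rightarrow> 'a::euclidean_space \<Rightarrow> real"
    and g :: "nat \<Rightarrow> 'a \<Rightarrow> 'a"
    and L :: "nat \<Rightarrow> real"
    and xs :: 'a
    and w \<beta> :: "nat \<Rightarrow> real"
    and \<gamma> :: real +
  fixes M :: "'m measure"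
    and S :: "'s measure"
    and \<xi> :: "nat \<Rightarrow> nat \<Rightarrow> 'm \<Rightarrow> 's"
    and Q :: "nat \<Rightarrow> nat \<Rightarrow> 's \<Rightarrow> 'a \<Rightarrow> 'a"
    and x0 :: 'a
    and h0 :: "nat \<Rightarrow> 'a"
    and x :: "nat \<Rightarrow> 'm \<Rightarrow> 'a"
    and h :: "nat \<Rightarrow> nat \<Rightarrow> 'm \<Rightarrow> 'a"
  assumes prob: "prob_space M"
    and indep: "prob_space.indep_vars M (\<lambda>_. S) (\<lambda>(k, i). \<xi> k i) {(k, i). i < n}"
    and Q_measurable: "\<And>k i. i < n \<Longrightarrow> (\<lambda>(s, v). Q k i s v) \<in> borel_measurable (S \<Otimes>\<^sub>M borel)"
    and Q_unbiased: "\<And>k i v. i < n \<Longrightarrow>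
        integrable M (\<lambda>\<omega>. Q k i (\<xi> k i \<omega>) v) \<and> (\<integral>\<omega>. Q k i (\<xi> k i \<omega>) v \<partial>M) = v"
    and Q_variance: "\<And>k i v. i < n \<Longrightarrow>
        integrable M (\<lambda>\<omega>. (norm (Q k i (\<xi> k i \<omega>) v - v))\<^sup>2) \<and>
        (\<integral>\<omega>. (norm (Q k i (\<xi> k i \<omega>) v - v))\<^sup>2 \<partial>M) \<le> w i * (norm v)\<^sup>2"
    and x_init: "\<And>\<omega>. x 0 \<omega> = x0"
    and h_init: "\<And>i \<omega>. h 0 i \<omega> = h0 i"
    and h_step: "\<And>k i \<omega>. h (Suc k) i \<omega> = h k i \<omega> + \<beta> i *\<^sub>R Q k i (\<xi> k i \<omega>) (g i (x k \<omega>) - h k i \<omega>)"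
    and x_step: "\<And>k \<omega>. x (Suc k) \<omega> = x k \<omega> - \<gamma> *\<^sub>R ((1 / real n) *\<^sub>R
        (\<Sum>i<n. h k i \<omega> + Q k i (\<xi> k i \<omega>) (g i (x k \<omega>) - h k i \<omega>)))"
begin

interpretation P: prob_space M by (rule prob)

text \<open>The iterates as functions of the compressor randomness \<open>p (k, i) = \<xi> k i \<omega>\<close>.\<close>

definition compressed :: "nat \<Rightarrow> (nat \<times> nat \<Rightarrow> 's) \<Rightarrow> 'a \<times> (nat \<Rightarrow> 'a) \<Rightarrow> nat \<Rightarrow> 'a" where
  "compressed k p s i = Q k i (p (k, i)) (g i (fst s) - snd s i)"

primrec state :: "nat \<Rightarrow> (nat \<times> nat \<Rightarrow> 's) \<Rightarrow> 'a \<times> (nat \<Rightarrow> 'a)" where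
  "state 0 p = (x0, h0)"
| "state (Suc k) p = diana_update (state k p) (compressed k p (state k p))"

definition noise :: "'m \<Rightarrow> nat \<times> nat \<Rightarrow> 's" where
  "noise \<omega> = (\<lambda>(k, i). \<xi> k i \<omega>)"

definition past :: "nat \<Rightarrow> (nat \<times> nat) set" where
  "past k = {(j, i). j < k \<and> i < n}"

definition present :: "nat \<Rightarrow> (nat \<times> nat) set" where
  "present k = {(j, i). j = k \<and> i < n}"

lemma state_noise: "state k (noise \<omega>) = (x k \<omega>, \<lambda>i. h k i \<omega>)"
proof (induction k)
  case 0
  then show ?case by (simp add: x_init h_init)
next
  case (Suc k)
  then show ?case
    by (simp add: diana_update_def grad_estimate_def compressed_def noise_def x_step h_step)
qed

lemma state_local:
  assumes "\<And>j i. j < k \<Longrightarrow> i < n \<Longrightarrow> p (j, i) = p' (j, i)"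
  shows "fst (state k p) = fst (state k p') \<and> (\<forall>i<n. snd (state k p) i = snd (state k p') i)"
  using assms
proof (induction k)
  case 0
  then show ?case by simp
next
  case (Suc k)
  then have "fst (state k p) = fst (state k p')" "\<And>i. i < n \<Longrightarrow> snd (state k p) i = snd (state k p') i"
    "\<And>i. i < n \<Longrightarrow> compressed k p (state k p) i = compressed k p' (state k p') i"
    unfolding compressed_def by auto
  then show ?case
    by (auto simp: diana_update_def grad_estimate_def intro!: sum.cong)
qed

lemma Q_measurable_comp:
  assumes "i < n" "c \<in> measurable N S" "v \<in> borel_measurable N"
  shows "(\<lambda>z. Q k i (c z) (v z)) \<in> borel_measurable N"
  using measurable_compose[OF measurable_Pair[OF assms(2,3)] Q_measurable[OF assms(1)]] by simp

lemma state_measurable: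
  assumes "past k \<subseteq> A"
  shows "(\<lambda>p. fst (state k p)) \<in> borel_measurable (PiM A (\<lambda>_. S))"
    and "i < n \<Longrightarrow> (\<lambda>p. snd (state k p) i) \<in> borel_measurable (PiM A (\<lambda>_. S))"
proof -
  have "(\<lambda>p. fst (state k p)) \<in> borel_measurable (PiM A (\<lambda>_. S)) \<and>
      (\<forall>i<n. (\<lambda>p. snd (state k p) i) \<in> borel_measurable (PiM A (\<lambda>_. S)))"
    using assms
  proof (induction k)
    case 0
    then show ?case by simp
  next
    case (Suc k)
    have "past k \<subseteq> past (Suc k)"
      unfolding past_def by auto
    with Suc have IH: "(\<lambda>p. fst (state k p)) \<in> borel_measurable (PiM A (\<lambda>_. S))"
      "\<And>i. i < n \<Longrightarrow> (\<lambda>p. snd (state k p) i) \<in> borel_measurable (PiM A (\<lambda>_. S))"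
      by auto
    have "(\<lambda>p. compressed k p (state k p) i) \<in> borel_measurable (PiM A (\<lambda>_. S))" if "i < n" for i
      unfolding compressed_def using that Suc.prems IH
      by (intro Q_measurable_comp measurable_component_singleton borel_measurable_diff
          measurable_compose[OF _ grad_measurable]) (auto simp: past_def)
    with diana_update_measurable[where X="\<lambda>p. fst (state k p)" and Hh="\<lambda>p. snd (state k p)"
        and Zz="\<lambda>p. compressed k p (state k p)", OF IH]
    show ?case by simp
  qed
  then show "(\<lambda>p. fst (state k p)) \<in> borel_measurable (PiM A (\<lambda>_. S))"
    and "i < n \<Longrightarrow> (\<lambda>p. snd (state k p) i) \<in> borel_measurable (PiM A (\<lambda>_. S))"
    by auto
qed

lemma compressor_uncorrelated:
  assumes i: "i < n" and j: "j < n" and "i \<noteq> j"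
  shows "integrable M (\<lambda>\<omega>. (Q k i (\<xi> k i \<omega>) a - a) \<bullet> (Q k j (\<xi> k j \<omega>) b - b))"
    and "(\<integral>\<omega>. (Q k i (\<xi> k i \<omega>) a - a) \<bullet> (Q k j (\<xi> k j \<omega>) b - b) \<partial>M) = 0"
proof -
  have "P.indep_var (PiM {(k, i)} (\<lambda>_. S)) (\<lambda>\<omega>. restrict (\<lambda>q. (\<lambda>(k, i). \<xi> k i) q \<omega>) {(k, i)})
      (PiM {(k, j)} (\<lambda>_. S)) (\<lambda>\<omega>. restrict (\<lambda>q. (\<lambda>(k, i). \<xi> k i) q \<omega>) {(k, j)})"
    using assms by (intro P.indep_var_restrict[OF indep]) auto
  from P.indep_var_compose[OF this measurable_component_singleton measurable_component_singleton]
  have "P.indep_var S (\<xi> k i) S (\<xi> k j)"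
    by (simp add: o_def)
  moreover have "(\<lambda>s. Q k l s c - c) \<in> borel_measurable S" if "l < n" for l c
    using that by (intro borel_measurable_diff Q_measurable_comp measurable_ident_sets) auto
  ultimately have ind: "P.indep_var borel (\<lambda>\<omega>. Q k i (\<xi> k i \<omega>) a - a) borel (\<lambda>\<omega>. Q k j (\<xi> k j \<omega>) b - b)"
    using P.indep_var_compose[of S "\<xi> k i" S "\<xi> k j" "\<lambda>s. Q k i s a - a" borel "\<lambda>s. Q k j s b - b" borel] i j
    by (simp add: o_def)
  have int_i: "integrable M (\<lambda>\<omega>. Q k i (\<xi> k i \<omega>) a - a)"
    using conjunct1[OF Q_unbiased[OF i]] by (rule Bochner_Integration.integrable_diff[OF _ P.integrable_const])
  have int_j: "integrable M (\<lambda>\<omega>. Q k j (\<xi> k j \<omega>) b - b)"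
    using conjunct1[OF Q_unbiased[OF j]] by (rule Bochner_Integration.integrable_diff[OF _ P.integrable_const])
  note inner = P.indep_var_integral_inner[OF ind int_i int_j]
  show "integrable M (\<lambda>\<omega>. (Q k i (\<xi> k i \<omega>) a - a) \<bullet> (Q k j (\<xi> k j \<omega>) b - b))"
    by (rule inner(1))
  show "(\<integral>\<omega>. (Q k i (\<xi> k i \<omega>) a - a) \<bullet> (Q k j (\<xi> k j \<omega>) b - b) \<partial>M) = 0"
    unfolding inner(2) using Q_unbiased[OF i] Q_unbiased[OF j] by (simp add: P.prob_space)
qed

lemma indep_past_present:
  "P.indep_var (PiM (past k) (\<lambda>_. S)) (\<lambda>\<omega>. restrict (noise \<omega>) (past k))
     (PiM (present k) (\<lambda>_. S)) (\<lambda>\<omega>. restrict (noise \<omega>) (present k))"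
proof -
  have "noise \<omega> = (\<lambda>q. (\<lambda>(k, i). \<xi> k i) q \<omega>)" for \<omega>
    unfolding noise_def by (auto split: prod.split)
  then show ?thesis
    using P.indep_var_restrict[OF indep, of "past k" "present k"] unfolding past_def present_def by auto
qed

lemma state_past:
  "fst (state k (restrict (noise \<omega>) (past k))) = x k \<omega>"
  "i < n \<Longrightarrow> snd (state k (restrict (noise \<omega>) (past k))) i = h k i \<omega>"
  using state_local[of k "restrict (noise \<omega>) (past k)" "noise \<omega>"] state_noise[of k \<omega>]
  by (auto simp: past_def)

lemma iterate_measurable:
  "x k \<in> borel_measurable M" "i < n \<Longrightarrow> (\<lambda>\<omega>. h k i \<omega>) \<in> borel_measurable M"
proof -
  have noise: "(\<lambda>\<omega>. restrict (noise \<omega>) (past k)) \<in> measurable M (PiM (past k) (\<lambda>_. S))"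
    using P.indep_var_rv1[OF indep_past_present] .
  show "x k \<in> borel_measurable M"
    using measurable_compose[OF noise state_measurable(1)[of k "past k"]] by (simp add: state_past)
  show "i < n \<Longrightarrow> (\<lambda>\<omega>. h k i \<omega>) \<in> borel_measurable M"
    using measurable_compose[OF noise state_measurable(2)[of k "past k" i]] by (simp add: state_past)
qed

lemma expected_step_value_le:
  "(\<integral>\<^sup>+\<omega>. ennreal (step_value s (compressed k (noise \<omega>) s)) \<partial>M) \<le> ennreal (lyapunov s)"
proof -
  let ?Z = "\<lambda>\<omega> i. Q k i (\<xi> k i \<omega>) (g i (fst s) - snd s i)"
  have "(\<integral>\<^sup>+\<omega>. ennreal (step_value (fst s, snd s) (?Z \<omega>)) \<partial>M) \<le> ennreal (lyapunov (fst s, snd s))"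
  proof (rule lyapunov_expected_decrease[OF prob])
    fix i assume i: "i < n"
    show "integrable M (\<lambda>\<omega>. ?Z \<omega> i) \<and> (\<integral>\<omega>. ?Z \<omega> i \<partial>M) = g i (fst s) - snd s i"
      using Q_unbiased[OF i] by blast
    show "integrable M (\<lambda>\<omega>. (norm (?Z \<omega> i - (g i (fst s) - snd s i)))\<^sup>2) \<and>
        (\<integral>\<omega>. (norm (?Z \<omega> i - (g i (fst s) - snd s i)))\<^sup>2 \<partial>M) \<le> w i * (norm (g i (fst s) - snd s i))\<^sup>2"
      using Q_variance[OF i] by blast
  next
    fix i j assume "i < n" "j < n" "i \<noteq> j"
    then show "integrable M (\<lambda>\<omega>. (?Z \<omega> i - (g i (fst s) - snd s i)) \<bullet> (?Z \<omega> j - (g j (fst s) - snd s j))) \<and>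
        (\<integral>\<omega>. (?Z \<omega> i - (g i (fst s) - snd s i)) \<bullet> (?Z \<omega> j - (g j (fst s) - snd s j)) \<partial>M) = 0"
      using compressor_uncorrelated by blast
  qed
  moreover have "compressed k (noise \<omega>) s = ?Z \<omega>" for \<omega>
    unfolding compressed_def noise_def by auto
  ultimately show ?thesis
    by simp
qed

lemma step_value_state_measurable:
  "(\<lambda>(p, c). ennreal (step_value (state k p) (compressed k c (state k p))))
     \<in> borel_measurable (PiM (past k) (\<lambda>_. S) \<Otimes>\<^sub>M PiM (present k) (\<lambda>_. S))"
proof -
  let ?A = "PiM (past k) (\<lambda>_. S)" and ?B = "PiM (present k) (\<lambda>_. S)"
  have X: "(\<lambda>pc. fst (state k (fst pc))) \<in> borel_measurable (?A \<Otimes>\<^sub>M ?B)"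
    by (rule measurable_compose[OF measurable_fst state_measurable(1)]) simp
  have H: "(\<lambda>pc. snd (state k (fst pc)) i) \<in> borel_measurable (?A \<Otimes>\<^sub>M ?B)" if "i < n" for i
    using that by (intro measurable_compose[OF measurable_fst state_measurable(2)]) auto
  have Z: "(\<lambda>pc. compressed k (snd pc) (state k (fst pc)) i) \<in> borel_measurable (?A \<Otimes>\<^sub>M ?B)" if "i < n" for i
    unfolding compressed_def using that X H
    by (intro Q_measurable_comp borel_measurable_diff measurable_compose[OF _ grad_measurable]
        measurable_compose[OF measurable_snd measurable_component_singleton]) (auto simp: present_def)
  show ?thesis
    using step_value_measurable[where Hh="\<lambda>pc. snd (state k (fst pc))"
        and Zz="\<lambda>pc. compressed k (snd pc) (state k (fst pc))", OF X H Z]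
    unfolding split_beta' by simp
qed

text \<open>The state after $k$ steps is a function of the randomness of the first $k$ rounds, which is
  independent of the randomness of round $k$; freezing it reduces the step to the one-step estimate.\<close>

lemma lyapunov_step:
  "(\<integral>\<^sup>+\<omega>. ennreal (lyapunov (x (Suc k) \<omega>, \<lambda>i. h (Suc k) i \<omega>) + \<gamma> * gap (x (Suc k) \<omega>)) \<partial>M)
     \<le> (\<integral>\<^sup>+\<omega>. ennreal (lyapunov (x k \<omega>, \<lambda>i. h k i \<omega>)) \<partial>M)"
proof -
  let ?past = "\<lambda>\<omega>. restrict (noise \<omega>) (past k)" and ?present = "\<lambda>\<omega>. restrict (noise \<omega>) (present k)"
  have "(\<integral>\<^sup>+\<omega>. ennreal (lyapunov (x (Suc k) \<omega>, \<lambda>i. h (Suc k) i \<omega>) + \<gamma> * gap (x (Suc k) \<omega>)) \<partial>M)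
      = (\<integral>\<^sup>+\<omega>. ennreal (step_value (state k (?past \<omega>)) (compressed k (?present \<omega>) (state k (?past \<omega>)))) \<partial>M)"
  proof (intro nn_integral_cong arg_cong[where f=ennreal])
    fix \<omega>
    have "lyapunov (x (Suc k) \<omega>, \<lambda>i. h (Suc k) i \<omega>) + \<gamma> * gap (x (Suc k) \<omega>)
        = step_value (state k (noise \<omega>)) (compressed k (noise \<omega>) (state k (noise \<omega>)))"
      using state_noise[of "Suc k" \<omega>] by (simp add: step_value_def)
    also have "\<dots> = step_value (state k (?past \<omega>)) (compressed k (?present \<omega>) (state k (?past \<omega>)))"
      using state_past state_noise[of k \<omega>] by (intro step_value_cong) (auto simp: compressed_def present_def)
    finally show "lyapunov (x (Suc k) \<omega>, \<lambda>i. h (Suc k) i \<omega>) + \<gamma> * gap (x (Suc k) \<omega>)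
        = step_value (state k (?past \<omega>)) (compressed k (?present \<omega>) (state k (?past \<omega>)))" .
  qed
  also have "\<dots> \<le> (\<integral>\<^sup>+\<omega>. ennreal (lyapunov (state k (?past \<omega>))) \<partial>M)"
  proof (rule P.nn_integral_indep_var_le[OF indep_past_present step_value_state_measurable, simplified])
    show "(\<lambda>p. ennreal (lyapunov (state k p))) \<in> borel_measurable (PiM (past k) (\<lambda>_. S))"
      using lyapunov_measurable[where X="\<lambda>p. fst (state k p)" and Hh="\<lambda>p. snd (state k p)"]
        state_measurable[of k "past k"] by simp
    fix p
    have "step_value (state k p) (compressed k (?present \<omega>) (state k p))
        = step_value (state k p) (compressed k (noise \<omega>) (state k p))" for \<omega>
      by (intro step_value_cong) (auto simp: compressed_def present_def)
    then show "(\<integral>\<^sup>+\<omega>. ennreal (step_value (state k p) (compressed k (?present \<omega>) (state k p))) \<partial>M)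
        \<le> ennreal (lyapunov (state k p))"
      using expected_step_value_le by simp
  qed
  also have "\<dots> = (\<integral>\<^sup>+\<omega>. ennreal (lyapunov (x k \<omega>, \<lambda>i. h k i \<omega>)) \<partial>M)"
    using state_past by (intro nn_integral_cong arg_cong[where f=ennreal] lyapunov_cong) auto
  finally show ?thesis .
qed

lemma lyapunov_telescope:
  "(\<integral>\<^sup>+\<omega>. ennreal (lyapunov (x K \<omega>, \<lambda>i. h K i \<omega>)) \<partial>M)
     + ennreal \<gamma> * (\<Sum>j=1..K. \<integral>\<^sup>+\<omega>. ennreal (gap (x j \<omega>)) \<partial>M)
   \<le> ennreal (lyapunov (x0, h0))"
proof (induction K)
  case 0
  then show ?case
    using P.emeasure_space_1 by (simp add: x_init h_init)
next
  case (Suc K)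
  have lyapunov_meas: "(\<lambda>\<omega>. ennreal (lyapunov (x (Suc K) \<omega>, \<lambda>i. h (Suc K) i \<omega>))) \<in> borel_measurable M"
    using iterate_measurable by (intro measurable_compose[OF _ measurable_ennreal] lyapunov_measurable) auto
  have gap_meas: "(\<lambda>\<omega>. ennreal (gap (x (Suc K) \<omega>))) \<in> borel_measurable M"
    using iterate_measurable gap_measurable by measurable
  have step: "(\<integral>\<^sup>+\<omega>. ennreal (lyapunov (x (Suc K) \<omega>, \<lambda>i. h (Suc K) i \<omega>)) \<partial>M)
        + ennreal \<gamma> * (\<integral>\<^sup>+\<omega>. ennreal (gap (x (Suc K) \<omega>)) \<partial>M)
      = (\<integral>\<^sup>+\<omega>. ennreal (lyapunov (x (Suc K) \<omega>, \<lambda>i. h (Suc K) i \<omega>) + \<gamma> * gap (x (Suc K) \<omega>)) \<partial>M)"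
    using lyapunov_meas gap_meas lyapunov_nonneg gap_nonneg gamma_pos
    by (simp add: nn_integral_add nn_integral_cmult ennreal_mult ennreal_plus)
  have "(\<integral>\<^sup>+\<omega>. ennreal (lyapunov (x (Suc K) \<omega>, \<lambda>i. h (Suc K) i \<omega>)) \<partial>M)
        + ennreal \<gamma> * (\<Sum>j=1..Suc K. \<integral>\<^sup>+\<omega>. ennreal (gap (x j \<omega>)) \<partial>M)
      = (\<integral>\<^sup>+\<omega>. ennreal (lyapunov (x (Suc K) \<omega>, \<lambda>i. h (Suc K) i \<omega>) + \<gamma> * gap (x (Suc K) \<omega>)) \<partial>M)
        + ennreal \<gamma> * (\<Sum>j=1..K. \<integral>\<^sup>+\<omega>. ennreal (gap (x j \<omega>)) \<partial>M)"
    unfolding step[symmetric] by (simp add: distrib_left add_ac)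
  also have "\<dots> \<le> (\<integral>\<^sup>+\<omega>. ennreal (lyapunov (x K \<omega>, \<lambda>i. h K i \<omega>)) \<partial>M)
        + ennreal \<gamma> * (\<Sum>j=1..K. \<integral>\<^sup>+\<omega>. ennreal (gap (x j \<omega>)) \<partial>M)"
    by (intro add_right_mono lyapunov_step)
  also have "\<dots> \<le> ennreal (lyapunov (x0, h0))"
    by (rule Suc.IH)
  finally show ?case .
qed

theorem ergodic_gap_bound:
  assumes k: "1 \<le> k"
  shows "(\<integral>\<^sup>+\<omega>. ennreal (avg ((1 / real k) *\<^sub>R (\<Sum>j=1..k. x j \<omega>)) - avg xs) \<partial>M)
           \<le> ennreal (lyapunov (x0, h0) / (\<gamma> * real k))"
proof -
  define T where "T = (\<Sum>j=1..k. \<integral>\<^sup>+\<omega>. ennreal (gap (x j \<omega>)) \<partial>M)"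
  have jensen: "avg ((1 / real k) *\<^sub>R (\<Sum>j=1..k. x j \<omega>)) - avg xs \<le> (1 / real k) * (\<Sum>j=1..k. gap (x j \<omega>))"
    for \<omega>
    using avg_mean_le[of "{1..k}" "\<lambda>j. x j \<omega>"] k unfolding gap_def by (simp add: sum_subtractf field_simps)
  have gap_meas: "(\<lambda>\<omega>. ennreal (gap (x j \<omega>))) \<in> borel_measurable M" for j
    using iterate_measurable gap_measurable by measurable
  have "(\<integral>\<^sup>+\<omega>. ennreal (avg ((1 / real k) *\<^sub>R (\<Sum>j=1..k. x j \<omega>)) - avg xs) \<partial>M)
      \<le> (\<integral>\<^sup>+\<omega>. ennreal (1 / real k) * (\<Sum>j=1..k. ennreal (gap (x j \<omega>))) \<partial>M)"
    using jensen gap_nonneg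
    by (intro nn_integral_mono) (simp add: ennreal_leI sum_nonneg flip: ennreal_mult)
  also have "\<dots> = ennreal (1 / real k) * T"
    unfolding T_def using gap_meas by (simp add: nn_integral_cmult nn_integral_sum)
  also have "\<dots> = ennreal (1 / (\<gamma> * real k)) * (ennreal \<gamma> * T)"
  proof -
    have "ennreal (1 / (\<gamma> * real k)) * ennreal \<gamma> = ennreal (1 / real k)"
      using gamma_pos by (simp flip: ennreal_mult)
    then show ?thesis by (simp flip: mult.assoc)
  qed
  also have "\<dots> \<le> ennreal (1 / (\<gamma> * real k)) * ennreal (lyapunov (x0, h0))"
    using lyapunov_telescope[of k] unfolding T_def
    by (intro mult_left_mono) (auto intro: order_trans[rotated] add_increasing)
  also have "\<dots> = ennreal (lyapunov (x0, h0) / (\<gamma> * real k))"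
    using gamma_pos k lyapunov_nonneg by (simp flip: ennreal_mult)
  finally show ?thesis .
qed

end

section \<open>Shifted local functions\<close>

lemma shiftT_diff: "shiftT a c y - shiftT a c x = a *\<^sub>R (y - x)"
  unfolding shiftT_def by (simp add: algebra_simps)

lemma convex_on_shiftT:
  assumes "convex_on UNIV f"
  shows "convex_on UNIV (\<lambda>x. f (shiftT a c x))"
proof (rule convex_onI)
  fix t :: real and x y assume t: "0 < t" "t < 1"
  have "shiftT a c ((1 - t) *\<^sub>R x + t *\<^sub>R y) = (1 - t) *\<^sub>R shiftT a c x + t *\<^sub>R shiftT a c y"
    unfolding shiftT_def by (simp add: algebra_simps)
  then show "f (shiftT a c ((1 - t) *\<^sub>R x + t *\<^sub>R y)) \<le> (1 - t) * f (shiftT a c x) + t * f (shiftT a c y)"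
    using t by (simp add: convex_onD[OF assms])
qed simp

lemma gderiv_shiftT:
  assumes "GDERIV f (shiftT a c x) :> D"
  shows "GDERIV (\<lambda>x. f (shiftT a c x)) x :> a *\<^sub>R D"
proof -
  have "(shiftT a c has_derivative (\<lambda>v. a *\<^sub>R v)) (at x)"
    unfolding shiftT_def by (auto intro!: derivative_eq_intros)
  from has_derivative_compose[OF this assms[unfolded gderiv_def]]
  show ?thesis
    unfolding gderiv_def by (simp add: o_def)
qed

lemma shiftT_gradient_lipschitz:
  assumes "\<And>y z. norm (G y - G z) \<le> L * norm (y - z)"
  shows "norm (a *\<^sub>R G (shiftT a c y) - a *\<^sub>R G (shiftT a c z)) \<le> a\<^sup>2 * L * norm (y - z)"
proof -
  have "norm (a *\<^sub>R G (shiftT a c y) - a *\<^sub>R G (shiftT a c z)) = \<bar>a\<bar> * norm (G (shiftT a c y) - G (shiftT a c z))"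
    by (simp flip: scaleR_diff_right)
  also have "\<dots> \<le> \<bar>a\<bar> * (L * norm (shiftT a c y - shiftT a c z))"
    using assms by (intro mult_left_mono) auto
  also have "\<dots> = a\<^sup>2 * L * norm (y - z)"
    unfolding shiftT_diff by (simp add: power2_eq_square abs_mult_self_eq)
  finally show ?thesis .
qed

lemma convex_smooth_sum_shiftT:
  assumes "0 < n"
    and "\<And>i. i < n \<Longrightarrow> convex_on UNIV (f i)"
    and "\<And>i y. i < n \<Longrightarrow> GDERIV (f i) y :> G i y"
    and "\<And>i y z. i < n \<Longrightarrow> norm (G i y - G i z) \<le> L i * norm (y - z)"
    and "\<And>y. ftilde n f \<alpha> xm xs \<le> ftilde n f \<alpha> xm y"
  shows "convex_smooth_sum n (\<lambda>i x. f i (shiftT (\<alpha> i) (xm i) x))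
           (\<lambda>i x. \<alpha> i *\<^sub>R G i (shiftT (\<alpha> i) (xm i) x)) (\<lambda>i. (\<alpha> i)\<^sup>2 * L i) xs"
proof
  show "(\<Sum>i<n. f i (shiftT (\<alpha> i) (xm i) xs)) \<le> (\<Sum>i<n. f i (shiftT (\<alpha> i) (xm i) y))" for y
    using assms(1) assms(5)[of y] unfolding ftilde_def by (simp add: divide_le_cancel)
qed (use assms in \<open>auto intro: convex_on_shiftT gderiv_shiftT shiftT_gradient_lipschitz\<close>)

theorem theorem6:
  fixes n :: nat
    and f :: "nat \<Rightarrow> 'a::euclidean_space \<Rightarrow> real"
    and G :: "nat \<Rightarrow> 'a \<Rightarrow> 'a"
    and L :: "nat \<Rightarrow> real"
    and xm :: "nat \<Rightarrow> 'a"
    and \<alpha> :: "nat \<Rightarrow> real"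
    and xs :: 'a
    and w \<beta> :: "nat \<Rightarrow> real"
    and \<gamma> :: real
    and M :: "'m measure"
    and S :: "'s measure"
    and \<xi> :: "nat \<Rightarrow> nat \<Rightarrow> 'm \<Rightarrow> 's"
    and Q :: "nat \<Rightarrow> nat \<Rightarrow> 's \<Rightarrow> 'a \<Rightarrow> 'a"
    and x0 :: 'a
    and h0 :: "nat \<Rightarrow> 'a"
    and x :: "nat \<Rightarrow> 'm \<Rightarrow> 'a"
    and h :: "nat \<Rightarrow> nat \<Rightarrow> 'm \<Rightarrow> 'a"
    and k :: nat
  assumes n_pos: "n \<ge> 1"
    and convex: "\<And>i. i < n \<Longrightarrow> convex_on UNIV (f i)"
    and grad: "\<And>i y. i < n \<Longrightarrow> GDERIV (f i) y :> G i y"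
    and smooth: "\<And>i y z. i < n \<Longrightarrow> norm (G i y - G i z) \<le> L i * norm (y - z)"
    and minim_i: "\<And>i y. i < n \<Longrightarrow> f i (xm i) \<le> f i y"
    and alpha: "\<And>i. i < n \<Longrightarrow> 0 < \<alpha> i \<and> \<alpha> i < 1"
    and minim: "\<And>y. ftilde n f \<alpha> xm xs \<le> ftilde n f \<alpha> xm y"
    and w_nonneg: "\<And>i. i < n \<Longrightarrow> 0 \<le> w i"
    and beta: "\<And>i. i < n \<Longrightarrow> 0 < \<beta> i \<and> \<beta> i \<le> 1 / (w i + 1)"
    and prob: "prob_space M"
    and indep: "prob_space.indep_vars M (\<lambda>_. S) (\<lambda>(kk, i). \<xi> kk i) {(kk, i). i < n}"
    and Q_meas: "\<And>kk i. i < n \<Longrightarrow> (\<lambda>(s, v). Q kk i s v) \<in> borel_measurable (S \<Otimes>\<^sub>M borel)"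
    and Q_unbiased: "\<And>kk i v. i < n \<Longrightarrow>
        integrable M (\<lambda>\<omega>. Q kk i (\<xi> kk i \<omega>) v) \<and> (\<integral>\<omega>. Q kk i (\<xi> kk i \<omega>) v \<partial>M) = v"
    and Q_var: "\<And>kk i v. i < n \<Longrightarrow>
        integrable M (\<lambda>\<omega>. (norm (Q kk i (\<xi> kk i \<omega>) v - v))\<^sup>2) \<and>
        (\<integral>\<omega>. (norm (Q kk i (\<xi> kk i \<omega>) v - v))\<^sup>2 \<partial>M) \<le> w i * (norm v)\<^sup>2"
    and x_init: "\<And>\<omega>. x 0 \<omega> = x0"
    and h_init: "\<And>i \<omega>. h 0 i \<omega> = h0 i"
    and h_step: "\<And>kk i \<omega>. h (Suc kk) i \<omega> = h kk i \<omega> + \<beta> i *\<^sub>R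
        Q kk i (\<xi> kk i \<omega>) (\<alpha> i *\<^sub>R G i (shiftT (\<alpha> i) (xm i) (x kk \<omega>)) - h kk i \<omega>)"
    and x_step: "\<And>kk \<omega>. x (Suc kk) \<omega> = x kk \<omega> - \<gamma> *\<^sub>R ((1 / real n) *\<^sub>R
        (\<Sum>i<n. h kk i \<omega> + Q kk i (\<xi> kk i \<omega>)
            (\<alpha> i *\<^sub>R G i (shiftT (\<alpha> i) (xm i) (x kk \<omega>)) - h kk i \<omega>)))"
    and gamma_pos: "0 < \<gamma>"
    and gamma_le: "\<gamma> \<le> 1 / (4 * ((1 / real n) * (\<Sum>i<n. (\<alpha> i)\<^sup>2 * L i)
        + 2 * Max ((\<lambda>i. L i * (\<alpha> i)\<^sup>2 * w i) ` {..<n}) / real n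
        + 4 * Max ((\<lambda>i. \<beta> i * w i * L i * (\<alpha> i)\<^sup>2) ` {..<n})
            / (real n * Min (\<beta> ` {..<n}))))"
    and k_pos: "k \<ge> 1"
  shows "(\<integral>\<^sup>+ \<omega>. ennreal (ftilde n f \<alpha> xm ((1 / real k) *\<^sub>R (\<Sum>j=1..k. x j \<omega>))
              - ftilde n f \<alpha> xm xs) \<partial>M)
         \<le> ennreal ((2 * (ftilde n f \<alpha> xm x0 - ftilde n f \<alpha> xm xs)
              + 4 * \<gamma> / (real n * Min (\<beta> ` {..<n}))
                  * ((1 / real n) * (\<Sum>i<n. w i * (norm (h0 i - \<alpha> i *\<^sub>R
                        G i (shiftT (\<alpha> i) (xm i) xs)))\<^sup>2))
              + (1 / \<gamma>) * (norm (x0 - xs))\<^sup>2) * (1 / real k))"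
proof -
  let ?\<phi> = "\<lambda>i x. f i (shiftT (\<alpha> i) (xm i) x)" and ?g = "\<lambda>i x. \<alpha> i *\<^sub>R G i (shiftT (\<alpha> i) (xm i) x)"
  have shifted: "convex_smooth_sum n ?\<phi> ?g (\<lambda>i. (\<alpha> i)\<^sup>2 * L i) xs"
    using n_pos convex grad smooth minim by (intro convex_smooth_sum_shiftT) auto
  have step_size: "\<gamma> \<le> 1 / (4 * ((1 / real n) * (\<Sum>i<n. (\<alpha> i)\<^sup>2 * L i)
        + 2 * Max ((\<lambda>i. w i * ((\<alpha> i)\<^sup>2 * L i)) ` {..<n}) / real n
        + 4 * Max ((\<lambda>i. \<beta> i * w i * ((\<alpha> i)\<^sup>2 * L i)) ` {..<n}) / (real n * Min (\<beta> ` {..<n}))))"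
    using gamma_le by (simp add: mult_ac)
  interpret diana_process n ?\<phi> ?g "\<lambda>i. (\<alpha> i)\<^sup>2 * L i" xs w \<beta> \<gamma> M S \<xi> Q x0 h0 x h
  proof (intro diana_process.intro diana.intro diana_axioms.intro diana_process_axioms.intro)
  qed (fact shifted w_nonneg beta gamma_pos step_size prob indep Q_meas Q_unbiased Q_var
      x_init h_init h_step x_step)+
  have "lyapunov (x0, h0) / (\<gamma> * real k)
      \<le> (2 * gap x0 + 4 * \<gamma> / (real n * beta_min) * memory_error h0 + (1 / \<gamma>) * (norm (x0 - xs))\<^sup>2) * (1 / real k)"
    using gap_nonneg[of x0] gamma_pos k_pos unfolding lyapunov_def by (simp add: field_simps power2_eq_square)
  moreover have "avg = ftilde n f \<alpha> xm"
    unfolding avg_def ftilde_def ..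
  ultimately show ?thesis
    using ergodic_gap_bound[OF k_pos] unfolding gap_def memory_error_def beta_min_def
    by (auto intro: order_trans ennreal_leI)
qed

end
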